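(* Let $U\in C^\infty(\mathbb{R}^{2d})$ be real and satisfy Hypothesis (U), with associated symplectomorphism $\Phi$. Then the map $S^m(\mathbb{R}^d)\ni a\mapsto\mathfrak{Op}^A_\Phi(a)\in\mathbb{B}(\mathcal S(\mathbb{R}^d))$ is injective.
   Context: Notation: $\langle\xi\rangle=(1+|\xi|^2)^{1/2}$, $\bar d\eta=(2\pi)^{-d}d\eta$. $S^m(\mathbb{R}^d)$: $a\in C^\infty(\mathbb{R}^{2d})$ with $|\partial_x^\alpha\partial_\xi^\beta a|\le C_{\alpha\beta}\langle\xi\rangle^{m-|\beta|}$. $S^+$: smooth $f$ with $\partial_{x_j}f\in S^1$, $\partial_{\xi_j}f\in S^0$. Hypothesis (U): $U(x,\eta)=\langle x,\eta\rangle+d(x,\eta)$, $d\in S^+$ real, $\|(\partial_{x_j}\partial_{\eta_k}d)\|\le\delta<1$ everywhere; $\Phi$ is given by $\Phi(\nabla_\eta U(x,\eta),\eta)=(x,\nabla_xU(x,\eta))$. Magnetic field $B=\frac12\sum B_{jk}dx_j\wedge dx_k$ closed, real $B_{jk}=-B_{kj}\in BC^\infty$; $A$ real 1-form with smooth polynomially bounded coefficients, $dA=B$; $\omega^A(x,y)=\exp\{-i\int_{[x,y]}A\}$ (line integral along the segment $x\to y$). $[\mathfrak{Op}^A_\Phi(a)u](x)=\iint e^{i(U(x,\eta)-\langle y,\eta\rangle)}\omega^A(x,y)a(x,\eta)u(y)dy\,\bar d\eta$ (oscillatory integral), a continuous linear operator on $\mathcal S(\mathbb{R}^d)$. *)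

theory Defs
  imports "HOL-Analysis.Analysis"
begin

definition dD :: "'a::real_normed_vector \<Rightarrow> ('a \<Rightarrow> 'b::real_normed_vector) \<Rightarrow> 'a \<Rightarrow> 'b" where
  "dD v f x = frechet_derivative f (at x) v"

fun dDs :: "'a::real_normed_vector list \<Rightarrow> ('a \<Rightarrow> 'b::real_normed_vector) \<Rightarrow> 'a \<Rightarrow> 'b" where
  "dDs [] f = f"
| "dDs (v # vs) f = dD v (dDs vs f)"

definition smooth :: "('a::euclidean_space \<Rightarrow> 'b::real_normed_vector) \<Rightarrow> bool" where
  "smooth f \<longleftrightarrow> (\<forall>vs. set vs \<subseteq> Basis \<longrightarrow> dDs vs f differentiable_on UNIV)"

definition jbr :: "'a::real_normed_vector \<Rightarrow> real" where
  "jbr \<xi> = sqrt (1 + (norm \<xi>)\<^sup>2)"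

text \<open>Basis directions of the product are (e_j,0) (x-derivatives)
  and (0,e_k) (xi-derivatives); the xi-order of a list of directions is the number of those with first
  component 0.\<close>
definition symb :: "real \<Rightarrow> ((real^'n) \<times> (real^'n) \<Rightarrow> 'b::real_normed_vector) set" where
  "symb m = {a. smooth a \<and>
     (\<forall>vs. set vs \<subseteq> Basis \<longrightarrow> (\<exists>C. \<forall>x \<xi>.
        norm (dDs vs a (x, \<xi>)) \<le> C * jbr \<xi> powr (m - real (length (filter (\<lambda>v. fst v = 0) vs)))))}"

definition splus :: "((real^'n) \<times> (real^'n) \<Rightarrow> 'b::real_normed_vector) set" where
  "splus = {f. smooth f \<and> (\<forall>j. dD (axis j 1, 0) f \<in> symb 1 \<and> dD (0, axis j 1) f \<in> symb 0)}"

definition mixmat :: "((real^'n) \<times> (real^'n) \<Rightarrow> real) \<Rightarrow> real^'n \<Rightarrow> real^'n \<Rightarrow> real^'n^'n" where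
  "mixmat d x \<eta> = (\<chi> j k. dD (axis j 1, 0) (dD (0, axis k 1) d) (x, \<eta>))"

definition bcinf :: "('a::euclidean_space \<Rightarrow> 'b::real_normed_vector) \<Rightarrow> bool" where
  "bcinf f \<longleftrightarrow> smooth f \<and> (\<forall>vs. set vs \<subseteq> Basis \<longrightarrow> (\<exists>C. \<forall>x. norm (dDs vs f x) \<le> C))"

definition polysmooth :: "('a::euclidean_space \<Rightarrow> 'b::real_normed_vector) \<Rightarrow> bool" where
  "polysmooth f \<longleftrightarrow> smooth f \<and>
     (\<forall>vs. set vs \<subseteq> Basis \<longrightarrow> (\<exists>C (N::nat). \<forall>x. norm (dDs vs f x) \<le> C * (1 + norm x) ^ N))"

definition schwartz :: "('a::euclidean_space \<Rightarrow> complex) set" where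
  "schwartz = {u. smooth u \<and>
     (\<forall>vs. set vs \<subseteq> Basis \<longrightarrow> (\<forall>N::nat. \<exists>C. \<forall>x. (1 + norm x) ^ N * norm (dDs vs u x) \<le> C))}"

text \<open>omega^A(x,y) = exp(-i int_{[x,y]} A), with A given by its coefficient vector field.\<close>
definition omegaA :: "(real^'n \<Rightarrow> real^'n) \<Rightarrow> real^'n \<Rightarrow> real^'n \<Rightarrow> complex" where
  "omegaA A x y = exp (- \<i> * complex_of_real (integral {0..1} (\<lambda>t. A (x + t *\<^sub>R (y - x)) \<bullet> (y - x))))"

text \<open>The magnetic FIO, for Schwartz u: the oscillatory integral is realised as the iterated
  (absolutely convergent) integral, first in y, then in eta.\<close>
definition OpA :: "(real^'n \<Rightarrow> real^'n) \<Rightarrow> ((real^'n) \<times> (real^'n) \<Rightarrow> real)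
     \<Rightarrow> ((real^'n) \<times> (real^'n) \<Rightarrow> complex) \<Rightarrow> (real^'n \<Rightarrow> complex) \<Rightarrow> real^'n \<Rightarrow> complex" where
  "OpA A U a u x = complex_of_real ((2 * pi) powr (- real CARD('n))) *
     (\<integral>\<eta>. (\<integral>y. exp (\<i> * complex_of_real (U (x, \<eta>) - y \<bullet> \<eta>)) * omegaA A x y * a (x, \<eta>) * u y \<partial>lborel) \<partial>lborel)"

end

theory Submission
  imports Defs "HOL-Probability.Probability"
begin

text \<open>Fix \<open>(x0, \<eta>0)\<close> and apply both operators at \<open>x0\<close> to the Gaussian wave packets
  \<open>u\<^sub>e(y) = exp (i \<integral>\<^bsub>[x0,y]\<^esub> A + i y\<cdot>\<eta>0 - e\<^sup>2|y|\<^sup>2/2)\<close>. Their phase cancels the magnetic factor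
  \<open>\<omega>\<^sup>A(x0, y)\<close>, so the \<open>y\<close>-integral is the Fourier transform of a Gaussian, and
  \<open>Op(a) u\<^sub>e (x0)\<close> is, up to a nonzero constant, the average of \<open>exp (i U(x0, \<eta>)) a(x0, \<eta>)\<close> against a
  Gaussian of width \<open>1/e\<close> centred at \<open>\<eta>0\<close>. Since symbols grow at most polynomially, dominated
  convergence as \<open>e \<rightarrow> 0\<close> recovers \<open>a(x0, \<eta>0)\<close>.

  The real work is showing that \<open>u\<^sub>e\<close> is a Schwartz function. Every derivative of the line
  integral is again an integral over \<open>t \<in> [0,1]\<close> of a polynomial in \<open>t\<close>, \<open>y\<close> and derivatives of
  \<open>A\<close> at \<open>x0 + t(y - x0)\<close>; all such functions are polynomially bounded, and the Gaussian factor
  absorbs any polynomial growth.\<close>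

section \<open>Gaussian integrals\<close>

lemma integrable_prod_Basis_lborel:
  fixes f :: "'a::euclidean_space \<Rightarrow> real \<Rightarrow> 'c::{real_normed_field,banach,second_countable_topology}"
  assumes int: "\<And>b. b\<in>Basis \<Longrightarrow> integrable lborel (f b)"
  shows "integrable lborel (\<lambda>x. \<Prod>b\<in>Basis. f b (x \<bullet> b))"
    and "(\<integral>x. (\<Prod>b\<in>Basis. f b (x \<bullet> b)) \<partial>lborel) = (\<Prod>b\<in>Basis. \<integral>x. f b x \<partial>lborel)"
proof -
  interpret product_sigma_finite "\<lambda>_::'a. lborel::real measure" by standard
  have [measurable]: "\<And>b. b\<in>Basis \<Longrightarrow> f b \<in> borel_measurable borel"
    using int by (simp add: borel_measurable_integrable)
  have meas: "(\<lambda>x. \<Prod>b\<in>Basis. f b (x \<bullet> b)) \<in> borel_measurable borel"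
    by measurable
  have coords: "(\<Prod>b\<in>Basis. f b ((\<Sum>c\<in>Basis. x c *\<^sub>R c) \<bullet> b)) = (\<Prod>b\<in>Basis. f b (x b))" for x
    by (intro prod.cong refl) (simp add: inner_sum_left inner_Basis if_distrib cong: if_cong)
  have "integrable (\<Pi>\<^sub>M b\<in>Basis. lborel) (\<lambda>x. \<Prod>b\<in>Basis. f b (x b))"
    by (rule product_integrable_prod) (auto intro: int)
  then show "integrable lborel (\<lambda>x. \<Prod>b\<in>Basis. f b (x \<bullet> b))"
    by (subst lborel_eq, subst integrable_distr_eq) (use meas coords in \<open>simp_all\<close>)
  show "(\<integral>x. (\<Prod>b\<in>Basis. f b (x \<bullet> b)) \<partial>lborel) = (\<Prod>b\<in>Basis. \<integral>x. f b x \<partial>lborel)"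
    by (subst lborel_eq, subst integral_distr)
      (use meas coords product_integral_prod[of Basis f] int in simp_all)
qed

lemma integral_std_normal_char:
  "(\<integral>x. complex_of_real (std_normal_density x) * exp (\<i> * complex_of_real (t * x)) \<partial>lborel)
     = complex_of_real (exp (- (t^2) / 2))"
proof -
  have "char std_normal_distribution t =
     (\<integral>x. std_normal_density x *\<^sub>R exp (\<i> * complex_of_real (t * x)) \<partial>lborel)"
    unfolding char_def by (subst integral_density) (auto simp: normal_density_nonneg)
  then show ?thesis by (simp add: char_std_normal_distribution scaleR_conv_of_real)
qed

lemma integrable_std_normal_char:
  "integrable lborel (\<lambda>x. complex_of_real (std_normal_density x) * exp (\<i> * complex_of_real (t * x)))"
proof (rule Bochner_Integration.integrable_bound[where f=std_normal_density])
  show "(\<lambda>x. complex_of_real (std_normal_density x) * exp (\<i> * complex_of_real (t * x))) \<in> borel_measurable lborel"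
    unfolding normal_density_def by measurable
qed (auto simp: norm_mult normal_density_nonneg)

lemma gaussian_fourier_real:
  fixes e z :: real
  assumes e: "e > 0"
  shows "integrable lborel (\<lambda>s. exp (- (\<i> * complex_of_real (s * z)) - complex_of_real (e\<^sup>2 / 2 * s\<^sup>2)))"
    and "(\<integral>s. exp (- (\<i> * complex_of_real (s * z)) - complex_of_real (e\<^sup>2 / 2 * s\<^sup>2)) \<partial>lborel)
          = complex_of_real (sqrt (2*pi) / e * exp (- (z\<^sup>2) / (2 * e\<^sup>2)))"
proof -
  define t where "t = - z / e"
  define h where "h x = complex_of_real (std_normal_density x) * exp (\<i> * complex_of_real (t * x))" for x
  have hint: "integrable lborel h"
    unfolding h_def by (rule integrable_std_normal_char)
  have rescale: "exp (- (\<i> * complex_of_real (s * z)) - complex_of_real (e\<^sup>2 / 2 * s\<^sup>2))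
        = complex_of_real (sqrt (2*pi)) * h (0 + e * s)" for s
  proof -
    have "complex_of_real (exp (- (e * s)\<^sup>2 / 2)) * exp (\<i> * complex_of_real (t * (e * s)))
        = exp (- (\<i> * complex_of_real (s * z)) - complex_of_real (e\<^sup>2 / 2 * s\<^sup>2))"
      using e unfolding t_def
      by (simp add: exp_of_real[symmetric] exp_add[symmetric] field_simps power2_eq_square)
    then show ?thesis
      unfolding h_def std_normal_density_def by (simp add: field_simps)
  qed
  show "integrable lborel (\<lambda>s. exp (- (\<i> * complex_of_real (s * z)) - complex_of_real (e\<^sup>2 / 2 * s\<^sup>2)))"
    unfolding rescale using lborel_integrable_real_affine[OF hint, of e 0] e by simp
  have "(\<integral>x. h x \<partial>lborel) = \<bar>e\<bar> *\<^sub>R (\<integral>s. h (0 + e * s) \<partial>lborel)"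
    using lborel_integral_real_affine[of e h 0] e by simp
  then have "(\<integral>s. h (0 + e * s) \<partial>lborel) = complex_of_real (exp (- (t^2) / 2) / e)"
    using e integral_std_normal_char[of t] by (simp add: h_def scaleR_conv_of_real field_simps)
  then show "(\<integral>s. exp (- (\<i> * complex_of_real (s * z)) - complex_of_real (e\<^sup>2 / 2 * s\<^sup>2)) \<partial>lborel)
          = complex_of_real (sqrt (2*pi) / e * exp (- (z\<^sup>2) / (2 * e\<^sup>2)))"
    unfolding rescale using e by (simp add: t_def power_divide field_simps)
qed

lemma gaussian_fourier:
  fixes z :: "'a::euclidean_space" and e :: real
  assumes e: "e > 0"
  shows "integrable lborel (\<lambda>y. exp (- (\<i> * complex_of_real (y \<bullet> z)) - complex_of_real (e\<^sup>2 / 2 * (y \<bullet> y))))"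
    and "(\<integral>y. exp (- (\<i> * complex_of_real (y \<bullet> z)) - complex_of_real (e\<^sup>2 / 2 * (y \<bullet> y))) \<partial>lborel)
          = complex_of_real ((sqrt (2*pi) / e) ^ DIM('a) * exp (- (z \<bullet> z) / (2 * e\<^sup>2)))"
proof -
  define f where "f b s = exp (- (\<i> * complex_of_real (s * (z \<bullet> b))) - complex_of_real (e\<^sup>2 / 2 * s\<^sup>2))" for b s
  have fint: "integrable lborel (f b)" for b
    unfolding f_def by (rule gaussian_fourier_real(1)[OF e])
  have factor: "exp (- (\<i> * complex_of_real (y \<bullet> z)) - complex_of_real (e\<^sup>2 / 2 * (y \<bullet> y)))
      = (\<Prod>b\<in>Basis. f b (y \<bullet> b))" for y
  proof -
    have "- (\<i> * complex_of_real (y \<bullet> z)) - complex_of_real (e\<^sup>2 / 2 * (y \<bullet> y))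
       = (\<Sum>b\<in>Basis. - (\<i> * complex_of_real ((y \<bullet> b) * (z \<bullet> b))) - complex_of_real (e\<^sup>2 / 2 * (y \<bullet> b)\<^sup>2))"
      by (simp add: euclidean_inner[of y z] euclidean_inner[of y y] sum_subtractf sum_negf
            sum_distrib_left of_real_sum power2_eq_square)
    then show ?thesis unfolding f_def by (simp add: exp_sum)
  qed
  show "integrable lborel (\<lambda>y. exp (- (\<i> * complex_of_real (y \<bullet> z)) - complex_of_real (e\<^sup>2 / 2 * (y \<bullet> y))))"
    unfolding factor by (rule integrable_prod_Basis_lborel(1)) (rule fint)
  have sum_sq: "(\<Sum>b\<in>(Basis::'a set). - ((z \<bullet> b)\<^sup>2) / (2 * e\<^sup>2)) = - (z \<bullet> z) / (2 * e\<^sup>2)"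
    by (simp add: euclidean_inner[of z z] sum_divide_distrib[symmetric] sum_negf power2_eq_square)
  have "(\<integral>y. exp (- (\<i> * complex_of_real (y \<bullet> z)) - complex_of_real (e\<^sup>2 / 2 * (y \<bullet> y))) \<partial>lborel)
     = (\<Prod>b\<in>Basis. \<integral>s. f b s \<partial>lborel)"
    unfolding factor by (rule integrable_prod_Basis_lborel(2)) (rule fint)
  also have "\<dots> = (\<Prod>b\<in>(Basis::'a set). complex_of_real (sqrt (2*pi) / e * exp (- ((z \<bullet> b)\<^sup>2) / (2 * e\<^sup>2))))"
    unfolding f_def by (intro prod.cong refl gaussian_fourier_real(2)[OF e])
  also have "\<dots> = complex_of_real ((sqrt (2*pi) / e) ^ DIM('a) * exp (- (z \<bullet> z) / (2 * e\<^sup>2)))"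
    by (simp only: of_real_prod[symmetric] prod.distrib prod_constant exp_sum[symmetric] finite_Basis sum_sq)
  finally show "(\<integral>y. exp (- (\<i> * complex_of_real (y \<bullet> z)) - complex_of_real (e\<^sup>2 / 2 * (y \<bullet> y))) \<partial>lborel)
          = complex_of_real ((sqrt (2*pi) / e) ^ DIM('a) * exp (- (z \<bullet> z) / (2 * e\<^sup>2)))" .
qed

lemma integrable_gaussian:
  fixes p :: "'a::euclidean_space" and c :: real
  assumes c: "c > 0"
  shows "integrable lborel (\<lambda>y. exp (- c * ((y - p) \<bullet> (y - p))))"
proof -
  define s where "s = 1 / sqrt (2 * c)"
  have s: "s > 0" "2 * s\<^sup>2 = 1 / c"
    using c by (simp_all add: s_def power_divide)
  define f where "f b x = sqrt (2 * pi * s\<^sup>2) * normal_density (p \<bullet> b) s x" for b x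
  have fint: "integrable lborel (f b)" for b
    unfolding f_def using s by (intro integrable_mult_right integrable_normal_density)
  have f_eq: "f b x = exp (- c * (x - p \<bullet> b)\<^sup>2)" for b x
    using s c unfolding f_def normal_density_def by (simp add: field_simps)
  have "- c * ((y - p) \<bullet> (y - p)) = (\<Sum>b\<in>Basis. - c * (y \<bullet> b - p \<bullet> b)\<^sup>2)" for y
    using euclidean_inner[of "y - p" "y - p"] by (simp add: sum_distrib_left inner_diff_left power2_eq_square)
  then have "exp (- c * ((y - p) \<bullet> (y - p))) = (\<Prod>b\<in>Basis. f b (y \<bullet> b))" for y
    by (simp add: f_eq exp_sum)
  then show ?thesis
    using integrable_prod_Basis_lborel(1)[OF fint] by simp
qed


section \<open>Polynomial bounds and Gaussian averages\<close>

lemma poly_times_gaussian_le: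
  fixes r c :: real and K :: nat
  assumes c: "c > 0" and r: "r \<ge> 0"
  shows "(1 + r) ^ K * exp (- c * r\<^sup>2) \<le> exp (real K ^ 2 / (4 * c))"
proof -
  have "(1 + r) ^ K \<le> exp r ^ K"
    using r by (intro power_mono) (auto simp: exp_ge_add_one_self)
  also have "\<dots> = exp (real K * r)"
    by (simp add: exp_of_nat_mult[symmetric])
  finally have "(1 + r) ^ K * exp (- c * r\<^sup>2) \<le> exp (real K * r) * exp (- c * r\<^sup>2)"
    by (intro mult_right_mono) auto
  also have "\<dots> = exp (real K * r - c * r\<^sup>2)"
    by (simp add: exp_add[symmetric])
  also have "real K * r - c * r\<^sup>2 \<le> real K ^ 2 / (4 * c)"
  proof -
    have "0 \<le> (real K - 2 * c * r)\<^sup>2" by simp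
    then show ?thesis using c by (simp add: field_simps power2_eq_square algebra_simps)
  qed
  finally show ?thesis by simp
qed

lemma one_plus_power_le_mult:
  fixes a b r :: real
  assumes "0 \<le> a" "0 \<le> b" "0 \<le> r" "r \<le> a + b"
  shows "(1 + r) ^ N \<le> (1 + a) ^ N * (1 + b) ^ N"
proof -
  have "(1 + a) * (1 + b) = 1 + (a + b) + a * b"
    by (simp add: algebra_simps)
  then have "1 + r \<le> (1 + a) * (1 + b)"
    using assms mult_nonneg_nonneg[of a b] by linarith
  then show ?thesis
    using assms by (simp add: power_mult_distrib[symmetric]) (intro power_mono, simp_all)
qed

lemma poly_bound_nonneg:
  fixes f :: "'a::real_normed_vector \<Rightarrow> 'b::real_normed_vector"
  assumes "norm (f 0) \<le> C * (1 + norm (0::'a)) ^ N"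
  shows "C \<ge> 0"
proof -
  have "norm (f 0) \<le> C" using assms by simp
  then show ?thesis using norm_ge_zero[of "f 0"] by linarith
qed

lemma poly_bound_add:
  fixes r u v :: real
  assumes "0 \<le> C1" "0 \<le> C2" "0 \<le> r" "u \<le> C1 * (1 + r) ^ N1" "v \<le> C2 * (1 + r) ^ N2"
  shows "u + v \<le> (C1 + C2) * (1 + r) ^ (N1 + N2)"
proof -
  have "(1 + r) ^ N1 \<le> (1 + r) ^ (N1 + N2)" "(1 + r) ^ N2 \<le> (1 + r) ^ (N1 + N2)"
    using assms(3) by (simp_all add: power_increasing)
  then have "C1 * (1 + r) ^ N1 + C2 * (1 + r) ^ N2 \<le> C1 * (1 + r) ^ (N1 + N2) + C2 * (1 + r) ^ (N1 + N2)"
    using assms(1,2) by (intro add_mono mult_left_mono)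
  then show ?thesis
    using assms(4,5) by (simp add: algebra_simps)
qed

lemma poly_bound_mult:
  fixes r u v :: real
  assumes "0 \<le> u" "0 \<le> v" "0 \<le> C1" "u \<le> C1 * (1 + r) ^ N1" "v \<le> C2 * (1 + r) ^ N2"
  shows "u * v \<le> (C1 * C2) * (1 + r) ^ (N1 + N2)"
proof -
  have "u * v \<le> (C1 * (1 + r) ^ N1) * (C2 * (1 + r) ^ N2)"
    using assms by (intro mult_mono) auto
  then show ?thesis
    by (simp add: power_add mult_ac)
qed

lemma poly_times_gaussian_le_gaussian:
  fixes p q y :: "'a::real_inner"
  assumes c: "c > 0" and C: "C \<ge> 0" and q: "norm q \<le> norm p + norm y"
  shows "C * (1 + norm q) ^ N * exp (- c * (y \<bullet> y))
    \<le> C * (1 + norm p) ^ N * exp (real N ^ 2 / (2 * c)) * exp (- (c/2) * (y \<bullet> y))"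
proof -
  have pw: "(1 + norm q) ^ N \<le> (1 + norm p) ^ N * (1 + norm y) ^ N"
    using q by (intro one_plus_power_le_mult) simp_all
  have pg: "(1 + norm y) ^ N * exp (- (c/2) * (norm y)\<^sup>2) \<le> exp (real N ^ 2 / (2 * c))"
    using c poly_times_gaussian_le[of "c/2" "norm y" N] by simp
  have split: "exp (- c * (y \<bullet> y)) = exp (- (c/2) * (norm y)\<^sup>2) * exp (- (c/2) * (y \<bullet> y))"
    by (simp add: power2_norm_eq_inner exp_add[symmetric])
  have "C * (1 + norm q) ^ N * exp (- c * (y \<bullet> y)) \<le> C * ((1 + norm p) ^ N * (1 + norm y) ^ N) * exp (- c * (y \<bullet> y))"
    using C pw by (intro mult_right_mono mult_left_mono) auto
  also have "\<dots> = C * (1 + norm p) ^ N * ((1 + norm y) ^ N * exp (- (c/2) * (norm y)\<^sup>2)) * exp (- (c/2) * (y \<bullet> y))"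
    unfolding split by (simp only: mult_ac)
  also have "\<dots> \<le> C * (1 + norm p) ^ N * exp (real N ^ 2 / (2 * c)) * exp (- (c/2) * (y \<bullet> y))"
    using C pg by (intro mult_right_mono mult_left_mono) auto
  finally show ?thesis .
qed

lemma integrable_poly_gaussian_bounded:
  fixes h :: "'a::euclidean_space \<Rightarrow> 'b::{banach,second_countable_topology}"
  assumes hm: "h \<in> borel_measurable borel"
    and c: "c > 0"
    and hb: "\<And>y. norm (h y) \<le> C * (1 + norm y) ^ N * exp (- c * ((y - p) \<bullet> (y - p)))"
  shows "integrable lborel h"
proof (rule Bochner_Integration.integrable_bound)
  define M where "M = C * (1 + norm p) ^ N * exp (real N ^ 2 / (2 * c))"
  show "integrable lborel (\<lambda>y. M * exp (- (c/2) * ((y - p) \<bullet> (y - p))))"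
    using c by (intro integrable_mult_right integrable_gaussian) auto
  show "h \<in> borel_measurable lborel"
    using hm by simp
  have "0 \<le> C * (1 + norm p) ^ N"
    using hb[of p] norm_ge_zero[of "h p"] by (simp del: norm_ge_zero)
  moreover have "0 < (1 + norm p) ^ N"
    by (simp add: add_pos_nonneg)
  ultimately have C0: "C \<ge> 0"
    by (simp add: zero_le_mult_iff)
  show "AE y in lborel. norm (h y) \<le> norm (M * exp (- (c/2) * ((y - p) \<bullet> (y - p))))"
  proof (intro AE_I2)
    fix y
    have "norm (h y) \<le> M * exp (- (c/2) * ((y - p) \<bullet> (y - p)))"
      unfolding M_def using hb[of y] poly_times_gaussian_le_gaussian[OF c C0, of y p "y - p" N]
        norm_triangle_ineq[of p "y - p"]
      by simp
    then show "norm (h y) \<le> norm (M * exp (- (c/2) * ((y - p) \<bullet> (y - p))))"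
      by simp
  qed
qed

lemma integral_lborel_affine:
  fixes f :: "'a::euclidean_space \<Rightarrow> 'b::{banach,second_countable_topology}"
  assumes f: "integrable lborel f" and c: "c \<noteq> 0"
  shows "(\<integral>x. f x \<partial>lborel) = (\<bar>c\<bar> ^ DIM('a)) *\<^sub>R (\<integral>x. f (t + c *\<^sub>R x) \<partial>lborel)"
proof -
  have [measurable]: "f \<in> borel_measurable borel"
    using f by (simp add: borel_measurable_integrable)
  have "integrable (density (distr lborel borel (\<lambda>x. t + c *\<^sub>R x)) (\<lambda>_. ennreal (\<bar>c\<bar> ^ DIM('a)))) f"
    using f lborel_affine[OF c, of t] by simp
  then show ?thesis
    by (subst lborel_affine[OF c, of t], subst integral_density, simp_all, subst integral_distr, simp_all)
qed

lemma tendsto_integral_gaussian_dilation: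
  fixes g :: "'a::euclidean_space \<Rightarrow> complex"
  assumes gc: "continuous_on UNIV g"
    and gb: "\<And>\<eta>. norm (g \<eta>) \<le> C * (1 + norm \<eta>) ^ N"
  defines "\<gamma> \<equiv> \<lambda>z. complex_of_real (exp (- (z \<bullet> z) / 2))"
  shows "(\<lambda>k. \<integral>z. g (p + (1 / real (Suc k)) *\<^sub>R z) * \<gamma> z \<partial>lborel) \<longlonglongrightarrow> (\<integral>z. g p * \<gamma> z \<partial>lborel)"
proof (rule integral_dominated_convergence)
  have C0: "C \<ge> 0"
    using gb[of 0] by (rule poly_bound_nonneg)
  have [measurable]: "g \<in> borel_measurable borel"
    using gc by (rule borel_measurable_continuous_onI)
  define M where "M = C * (1 + norm p) ^ N * exp (real N ^ 2 / (2 * (1/2)))"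
  show "integrable lborel (\<lambda>z. M * exp (- (1/4) * ((z - 0) \<bullet> (z - 0))))"
    by (intro integrable_mult_right integrable_gaussian) auto
  show "(\<lambda>z. g p * \<gamma> z) \<in> borel_measurable lborel"
    and "(\<lambda>z. g (p + (1 / real (Suc k)) *\<^sub>R z) * \<gamma> z) \<in> borel_measurable lborel" for k
    unfolding \<gamma>_def by measurable
  show "AE z in lborel. (\<lambda>k. g (p + (1 / real (Suc k)) *\<^sub>R z) * \<gamma> z) \<longlonglongrightarrow> g p * \<gamma> z"
  proof (intro AE_I2 tendsto_intros)
    fix z
    have "(\<lambda>k. p + (1 / real (Suc k)) *\<^sub>R z) \<longlonglongrightarrow> p + 0 *\<^sub>R z"
      by (intro tendsto_intros LIMSEQ_Suc[OF lim_inverse_n'])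
    then have "(\<lambda>k. p + (1 / real (Suc k)) *\<^sub>R z) \<longlonglongrightarrow> p"
      by simp
    moreover have "isCont g p"
      using gc by (simp add: continuous_on_eq_continuous_at)
    ultimately show "(\<lambda>k. g (p + (1 / real (Suc k)) *\<^sub>R z)) \<longlonglongrightarrow> g p"
      using isCont_tendsto_compose by blast
  qed
  show "AE z in lborel. norm (g (p + (1 / real (Suc k)) *\<^sub>R z) * \<gamma> z) \<le> M * exp (- (1/4) * ((z - 0) \<bullet> (z - 0)))" for k
  proof (intro AE_I2)
    fix z :: 'a
    have "norm ((1 / real (Suc k)) *\<^sub>R z) \<le> norm z"
      by (simp add: divide_le_eq mult_le_cancel_left1)
    then have "norm (p + (1 / real (Suc k)) *\<^sub>R z) \<le> norm p + norm z"
      using norm_triangle_ineq[of p "(1 / real (Suc k)) *\<^sub>R z"] by linarith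
    moreover have "norm (g (p + (1 / real (Suc k)) *\<^sub>R z) * \<gamma> z)
        \<le> C * (1 + norm (p + (1 / real (Suc k)) *\<^sub>R z)) ^ N * exp (- (1/2) * (z \<bullet> z))"
      unfolding \<gamma>_def norm_mult by (simp add: mult_right_mono gb)
    ultimately show "norm (g (p + (1 / real (Suc k)) *\<^sub>R z) * \<gamma> z) \<le> M * exp (- (1/4) * ((z - 0) \<bullet> (z - 0)))"
      unfolding M_def using poly_times_gaussian_le_gaussian[of "1/2" C _ p z N] C0
      by (simp add: order_trans)
  qed
qed

lemma eq_zero_if_gaussian_averages_vanish:
  fixes g :: "'a::euclidean_space \<Rightarrow> complex"
  assumes gc: "continuous_on UNIV g"
    and gb: "\<And>\<eta>. norm (g \<eta>) \<le> C * (1 + norm \<eta>) ^ N"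
    and vanish: "\<And>e. e > 0 \<Longrightarrow>
      (\<integral>\<eta>. g \<eta> * complex_of_real (exp (- ((\<eta> - p) \<bullet> (\<eta> - p)) / (2 * e\<^sup>2))) \<partial>lborel) = 0"
  shows "g p = 0"
proof -
  define \<gamma> where "\<gamma> z = complex_of_real (exp (- (z \<bullet> z) / 2))" for z :: 'a
  have C0: "C \<ge> 0"
    using gb[of 0] by (rule poly_bound_nonneg)
  have [measurable]: "g \<in> borel_measurable borel"
    using gc by (rule borel_measurable_continuous_onI)
  have dilated: "(\<integral>z. g (p + e *\<^sub>R z) * \<gamma> z \<partial>lborel) = 0" if e: "e > 0" for e
  proof -
    define G where "G \<eta> = g \<eta> * complex_of_real (exp (- ((\<eta> - p) \<bullet> (\<eta> - p)) / (2 * e\<^sup>2)))" for \<eta>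
    have "integrable lborel G"
    proof (rule integrable_poly_gaussian_bounded[where c="1 / (2 * e\<^sup>2)"])
      show "G \<in> borel_measurable borel"
        unfolding G_def by measurable
      show "norm (G y) \<le> C * (1 + norm y) ^ N * exp (- (1 / (2 * e\<^sup>2)) * ((y - p) \<bullet> (y - p)))" for y
        unfolding G_def norm_mult by (simp add: mult_right_mono gb)
    qed (use e in simp)
    then have "(\<integral>\<eta>. G \<eta> \<partial>lborel) = (\<bar>e\<bar> ^ DIM('a)) *\<^sub>R (\<integral>z. G (p + e *\<^sub>R z) \<partial>lborel)"
      using e by (intro integral_lborel_affine) auto
    moreover have "G (p + e *\<^sub>R z) = g (p + e *\<^sub>R z) * \<gamma> z" for z
      using e unfolding G_def \<gamma>_def by (simp add: power2_eq_square)
    moreover have "(\<integral>\<eta>. G \<eta> \<partial>lborel) = 0"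
      using vanish[OF e] unfolding G_def .
    ultimately show ?thesis
      using e by simp
  qed
  have "(\<lambda>k. \<integral>z. g (p + (1 / real (Suc k)) *\<^sub>R z) * \<gamma> z \<partial>lborel) \<longlonglongrightarrow> (\<integral>z. g p * \<gamma> z \<partial>lborel)"
    unfolding \<gamma>_def using gc gb by (rule tendsto_integral_gaussian_dilation)
  then have "(\<integral>z. g p * \<gamma> z \<partial>lborel) = 0"
    by (simp add: dilated LIMSEQ_const_iff)
  moreover have "\<gamma> = (\<lambda>y. exp (- (\<i> * complex_of_real (y \<bullet> 0)) - complex_of_real (1\<^sup>2 / 2 * (y \<bullet> y))))"
    unfolding \<gamma>_def by (auto simp: exp_of_real[symmetric])
  then have "(\<integral>z. \<gamma> z \<partial>lborel) = complex_of_real (sqrt (2*pi) ^ DIM('a))"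
    using gaussian_fourier(2)[of 1 "0::'a"] by simp
  ultimately show "g p = 0"
    by simp
qed

section \<open>Algebras of parametrised functions with polynomially bounded partial derivatives\<close>

inductive_set generated_algebra :: "(real \<Rightarrow> 'a::euclidean_space \<Rightarrow> 'k::real_normed_field) set \<Rightarrow> (real \<Rightarrow> 'a \<Rightarrow> 'k) set"
  for S where
  generator: "G \<in> S \<Longrightarrow> G \<in> generated_algebra S"
| const: "(\<lambda>t y. c) \<in> generated_algebra S"
| add: "G \<in> generated_algebra S \<Longrightarrow> H \<in> generated_algebra S \<Longrightarrow> (\<lambda>t y. G t y + H t y) \<in> generated_algebra S"
| mult: "G \<in> generated_algebra S \<Longrightarrow> H \<in> generated_algebra S \<Longrightarrow> (\<lambda>t y. G t y * H t y) \<in> generated_algebra S"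

lemma generated_algebra_sum:
  assumes "finite I" "\<And>i. i \<in> I \<Longrightarrow> (\<lambda>t y. f i t y) \<in> generated_algebra S"
  shows "(\<lambda>t y. \<Sum>i\<in>I. f i t y) \<in> generated_algebra S"
  using assms
proof (induction I rule: finite_induct)
  case empty
  then show ?case using generated_algebra.const[of 0 S] by simp
next
  case (insert x F)
  then show ?case by (simp add: generated_algebra.add)
qed

definition jointly_continuous :: "(real \<Rightarrow> 'a::topological_space \<Rightarrow> 'b::topological_space) \<Rightarrow> bool" where
  "jointly_continuous G \<longleftrightarrow> continuous_on UNIV (\<lambda>z. G (fst z) (snd z))"

definition has_partials_in :: "(real \<Rightarrow> 'a::euclidean_space \<Rightarrow> 'k::real_normed_field) set \<Rightarrow> (real \<Rightarrow> 'a \<Rightarrow> 'k) \<Rightarrow> bool" where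
  "has_partials_in X G \<longleftrightarrow> (\<exists>D. (\<forall>b\<in>Basis. D b \<in> X) \<and>
      (\<forall>t y. (G t has_derivative (\<lambda>v. \<Sum>b\<in>Basis. of_real (v \<bullet> b) * D b t y)) (at y)))"

definition poly_bounded_on_unit :: "(real \<Rightarrow> 'a::real_normed_vector \<Rightarrow> 'b::real_normed_vector) \<Rightarrow> bool" where
  "poly_bounded_on_unit G \<longleftrightarrow> (\<exists>C N. \<forall>t\<in>{0..1}. \<forall>y. norm (G t y) \<le> C * (1 + norm y) ^ N)"

definition admissible :: "(real \<Rightarrow> 'a::euclidean_space \<Rightarrow> 'k::real_normed_field) set \<Rightarrow> (real \<Rightarrow> 'a \<Rightarrow> 'k) \<Rightarrow> bool" where
  "admissible X G \<longleftrightarrow> jointly_continuous G \<and> has_partials_in X G \<and> poly_bounded_on_unit G"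

lemma jointly_continuous_slice:
  assumes "jointly_continuous G"
  shows "continuous_on A (\<lambda>t. G t y)"
proof -
  have "continuous_on A ((\<lambda>z. G (fst z) (snd z)) \<circ> (\<lambda>t. (t, y)))"
    using assms unfolding jointly_continuous_def
    by (intro continuous_on_compose continuous_intros) (auto intro: continuous_on_subset)
  then show ?thesis by (simp add: o_def)
qed

lemma jointly_continuous_swap:
  assumes "jointly_continuous G"
  shows "continuous_on A (\<lambda>x. G (snd x) (fst x))"
proof -
  have "continuous_on A ((\<lambda>z. G (fst z) (snd z)) \<circ> (\<lambda>x. (snd x, fst x)))"
    using assms unfolding jointly_continuous_def
    by (intro continuous_on_compose continuous_intros) (auto intro: continuous_on_subset)
  then show ?thesis by (simp add: o_def)
qed

lemma poly_bounded_on_unitE: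
  assumes "poly_bounded_on_unit G"
  obtains C N where "C \<ge> 0" "\<And>t y. t \<in> {0..1} \<Longrightarrow> norm (G t y) \<le> C * (1 + norm y) ^ N"
proof -
  obtain C N where CN: "\<forall>t\<in>{0..1}. \<forall>y. norm (G t y) \<le> C * (1 + norm y) ^ N"
    using assms unfolding poly_bounded_on_unit_def by blast
  have "C \<ge> 0"
    using spec[OF bspec[OF CN, of 0], of 0] by (intro poly_bound_nonneg[of "G 0"]) simp
  with CN that show ?thesis by blast
qed

lemma admissible_const: "admissible (generated_algebra S) (\<lambda>t y. c)"
proof -
  have "has_partials_in (generated_algebra S) (\<lambda>t (y::'a). c)"
    unfolding has_partials_in_def
    by (rule exI[where x="\<lambda>b t y. 0"]) (auto intro: generated_algebra.const)
  moreover have "poly_bounded_on_unit (\<lambda>t (y::'a). c)"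
    unfolding poly_bounded_on_unit_def by (rule exI[where x="norm c"], rule exI[where x=0]) simp
  ultimately show ?thesis
    unfolding admissible_def jointly_continuous_def by (auto intro: continuous_intros)
qed

lemma admissible_add:
  assumes "admissible (generated_algebra S) G" "admissible (generated_algebra S) H"
  shows "admissible (generated_algebra S) (\<lambda>t y. G t y + H t y)"
proof -
  obtain DG DH where DG: "\<forall>b\<in>Basis. DG b \<in> generated_algebra S"
      "\<forall>t y. (G t has_derivative (\<lambda>v. \<Sum>b\<in>Basis. of_real (v \<bullet> b) * DG b t y)) (at y)"
    and DH: "\<forall>b\<in>Basis. DH b \<in> generated_algebra S"
      "\<forall>t y. (H t has_derivative (\<lambda>v. \<Sum>b\<in>Basis. of_real (v \<bullet> b) * DH b t y)) (at y)"
    using assms unfolding admissible_def has_partials_in_def by blast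
  have "has_partials_in (generated_algebra S) (\<lambda>t y. G t y + H t y)"
    unfolding has_partials_in_def
  proof (intro exI[where x="\<lambda>b t y. DG b t y + DH b t y"] conjI allI ballI)
    show "(\<lambda>t y. DG b t y + DH b t y) \<in> generated_algebra S" if "b \<in> Basis" for b
      using that DG DH by (auto intro: generated_algebra.add)
    fix t y
    have "((\<lambda>y. G t y + H t y) has_derivative
        (\<lambda>v. (\<Sum>b\<in>Basis. of_real (v \<bullet> b) * DG b t y) + (\<Sum>b\<in>Basis. of_real (v \<bullet> b) * DH b t y))) (at y)"
      using DG DH by (intro has_derivative_add) auto
    then show "((\<lambda>y. G t y + H t y) has_derivative
        (\<lambda>v. \<Sum>b\<in>Basis. of_real (v \<bullet> b) * (DG b t y + DH b t y))) (at y)"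
      by (simp add: distrib_left sum.distrib)
  qed
  moreover have "poly_bounded_on_unit (\<lambda>t y. G t y + H t y)"
  proof -
    have "poly_bounded_on_unit G" "poly_bounded_on_unit H"
      using assms unfolding admissible_def by blast+
    then obtain C1 N1 C2 N2 where
      C1: "C1 \<ge> 0" "\<And>t y. t \<in> {0..1} \<Longrightarrow> norm (G t y) \<le> C1 * (1 + norm y) ^ N1" and
      C2: "C2 \<ge> 0" "\<And>t y. t \<in> {0..1} \<Longrightarrow> norm (H t y) \<le> C2 * (1 + norm y) ^ N2"
      by (elim poly_bounded_on_unitE) blast
    have "norm (G t y + H t y) \<le> (C1 + C2) * (1 + norm y) ^ (N1 + N2)" if "t \<in> {0..1}" for t y
    proof -
      have "norm (G t y) + norm (H t y) \<le> (C1 + C2) * (1 + norm y) ^ (N1 + N2)"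
        using that C1 C2 by (intro poly_bound_add) auto
      then show ?thesis
        using norm_triangle_ineq[of "G t y" "H t y"] by linarith
    qed
    then show ?thesis
      unfolding poly_bounded_on_unit_def by blast
  qed
  ultimately show ?thesis
    using assms unfolding admissible_def jointly_continuous_def by (auto intro: continuous_intros)
qed

lemma admissible_mult:
  assumes "G \<in> generated_algebra S" "H \<in> generated_algebra S"
    and "admissible (generated_algebra S) G" "admissible (generated_algebra S) H"
  shows "admissible (generated_algebra S) (\<lambda>t y. G t y * H t y)"
proof -
  obtain DG DH where DG: "\<forall>b\<in>Basis. DG b \<in> generated_algebra S"
      "\<forall>t y. (G t has_derivative (\<lambda>v. \<Sum>b\<in>Basis. of_real (v \<bullet> b) * DG b t y)) (at y)"
    and DH: "\<forall>b\<in>Basis. DH b \<in> generated_algebra S"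
      "\<forall>t y. (H t has_derivative (\<lambda>v. \<Sum>b\<in>Basis. of_real (v \<bullet> b) * DH b t y)) (at y)"
    using assms unfolding admissible_def has_partials_in_def by blast
  have "has_partials_in (generated_algebra S) (\<lambda>t y. G t y * H t y)"
    unfolding has_partials_in_def
  proof (intro exI[where x="\<lambda>b t y. G t y * DH b t y + DG b t y * H t y"] conjI allI ballI)
    show "(\<lambda>t y. G t y * DH b t y + DG b t y * H t y) \<in> generated_algebra S" if "b \<in> Basis" for b
      using that DG DH assms(1,2) by (auto intro!: generated_algebra.add generated_algebra.mult)
    fix t y
    have "((\<lambda>y. G t y * H t y) has_derivative (\<lambda>v. G t y * (\<Sum>b\<in>Basis. of_real (v \<bullet> b) * DH b t y)
        + (\<Sum>b\<in>Basis. of_real (v \<bullet> b) * DG b t y) * H t y)) (at y)"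
      using DG DH by (intro has_derivative_mult) auto
    then show "((\<lambda>y. G t y * H t y) has_derivative
        (\<lambda>v. \<Sum>b\<in>Basis. of_real (v \<bullet> b) * (G t y * DH b t y + DG b t y * H t y))) (at y)"
      by (simp add: distrib_left sum.distrib sum_distrib_left sum_distrib_right algebra_simps)
  qed
  moreover have "poly_bounded_on_unit (\<lambda>t y. G t y * H t y)"
  proof -
    have "poly_bounded_on_unit G" "poly_bounded_on_unit H"
      using assms unfolding admissible_def by blast+
    then obtain C1 N1 C2 N2 where "C1 \<ge> 0" "\<And>t y. t \<in> {0..1} \<Longrightarrow> norm (G t y) \<le> C1 * (1 + norm y) ^ N1"
      "\<And>t y. t \<in> {0..1} \<Longrightarrow> norm (H t y) \<le> C2 * (1 + norm y) ^ N2"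
      by (elim poly_bounded_on_unitE) blast
    then have "norm (G t y * H t y) \<le> (C1 * C2) * (1 + norm y) ^ (N1 + N2)" if "t \<in> {0..1}" for t y
      using that by (simp add: norm_mult poly_bound_mult)
    then show ?thesis
      unfolding poly_bounded_on_unit_def by blast
  qed
  ultimately show ?thesis
    using assms unfolding admissible_def jointly_continuous_def by (auto intro: continuous_intros)
qed

lemma generated_algebra_admissible:
  assumes "\<And>G. G \<in> S \<Longrightarrow> admissible (generated_algebra S) G"
    and "G \<in> generated_algebra S"
  shows "admissible (generated_algebra S) G"
  using assms(2)
  by induction (auto intro: assms(1) admissible_const admissible_add admissible_mult)

lemma admissible_of_real_inner:
  "admissible (generated_algebra S) (\<lambda>t y. of_real (y \<bullet> c) :: 'k::real_normed_field)"
proof -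
  have "((\<lambda>y. of_real (y \<bullet> c) :: 'k) has_derivative
      (\<lambda>v. \<Sum>b\<in>Basis. of_real (v \<bullet> b) * of_real (b \<bullet> c))) (at y)" for y
  proof -
    have "(\<lambda>v. of_real (v \<bullet> c) :: 'k) = (\<lambda>v. \<Sum>b\<in>Basis. of_real (v \<bullet> b) * of_real (b \<bullet> c))"
    proof
      fix v :: 'a
      have "v \<bullet> c = (\<Sum>b\<in>Basis. (v \<bullet> b) * (c \<bullet> b))"
        by (rule euclidean_inner)
      then show "of_real (v \<bullet> c) = (\<Sum>b\<in>Basis. of_real (v \<bullet> b) * (of_real (b \<bullet> c) :: 'k))"
        by (simp add: inner_commute)
    qed
    moreover have "((\<lambda>y. of_real (y \<bullet> c) :: 'k) has_derivative (\<lambda>v. of_real (v \<bullet> c))) (at y)"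
      by (intro bounded_linear.has_derivative[OF bounded_linear_of_real] has_derivative_inner_left
          has_derivative_ident)
    ultimately show ?thesis by simp
  qed
  then have "has_partials_in (generated_algebra S) (\<lambda>t y. of_real (y \<bullet> c) :: 'k)"
    unfolding has_partials_in_def
  proof (intro exI[where x="\<lambda>b t y. of_real (b \<bullet> c)"] conjI ballI allI)
    show "(\<lambda>t y. of_real (b \<bullet> c)) \<in> generated_algebra S" for b
      by (rule generated_algebra.const)
  qed
  moreover have "poly_bounded_on_unit (\<lambda>t y. of_real (y \<bullet> c) :: 'k)"
    unfolding poly_bounded_on_unit_def
  proof (intro exI[where x="norm c"] exI[where x=1] ballI allI)
    fix t and y :: 'a
    have "\<bar>y \<bullet> c\<bar> \<le> norm y * norm c"
      by (rule Cauchy_Schwarz_ineq2)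
    then show "norm (of_real (y \<bullet> c) :: 'k) \<le> norm c * (1 + norm y) ^ 1"
      using norm_ge_zero[of c] by (simp add: algebra_simps del: norm_ge_zero)
  qed
  moreover have "jointly_continuous (\<lambda>t y. of_real (y \<bullet> c) :: 'k)"
    unfolding jointly_continuous_def by (intro continuous_intros)
  ultimately show ?thesis
    unfolding admissible_def by blast
qed

lemma admissible_param: "admissible (generated_algebra S) (\<lambda>t (y::'a::euclidean_space). t)"
  unfolding admissible_def jointly_continuous_def has_partials_in_def poly_bounded_on_unit_def
  by (intro conjI exI[where x="\<lambda>b t y. 0"] exI[where x=1] exI[where x=0])
    (auto intro: continuous_intros generated_algebra.const)

section \<open>Integrals along segments\<close>

lemma has_derivative_integral_unit_interval:
  fixes G :: "real \<Rightarrow> 'a::euclidean_space \<Rightarrow> real"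
  assumes cG: "jointly_continuous G"
    and D: "\<And>t y. (G t has_derivative (\<lambda>v. \<Sum>b\<in>Basis. (v \<bullet> b) * D b t y)) (at y)"
    and cD: "\<And>b. b \<in> Basis \<Longrightarrow> jointly_continuous (D b)"
  shows "((\<lambda>y. integral {0..1} (\<lambda>t. G t y)) has_derivative
            (\<lambda>v. \<Sum>b\<in>Basis. (v \<bullet> b) * integral {0..1} (\<lambda>t. D b t y0))) (at y0)"
proof -
  define fx where "fx x t = (\<Sum>b\<in>Basis. D b t x *\<^sub>R blinfun_inner_left b)" for x t
  have fx_apply: "blinfun_apply (fx x t) = (\<lambda>v. \<Sum>b\<in>Basis. (v \<bullet> b) * D b t x)" for x t
    by (rule ext) (simp add: fx_def blinfun.sum_left scaleR_blinfun.rep_eq mult.commute)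
  have leibniz: "((\<lambda>x. integral (cbox 0 1) (\<lambda>t. G t x)) has_derivative integral (cbox 0 1) (fx y0))
      (at y0 within UNIV)"
  proof (rule leibniz_rule)
    show "((\<lambda>x. G t x) has_derivative blinfun_apply (fx x t)) (at x within UNIV)" for x t
      unfolding fx_apply using D[of t x] by simp
    show "(\<lambda>t. G t x) integrable_on cbox 0 1" for x
      by (intro integrable_continuous jointly_continuous_slice cG)
    show "continuous_on (UNIV \<times> cbox 0 1) (\<lambda>(x, t). fx x t)"
      unfolding fx_def split_beta by (intro continuous_intros jointly_continuous_swap cD)
  qed auto
  have "blinfun_apply (integral (cbox 0 1) (fx y0)) v
      = (\<Sum>b\<in>Basis. (v \<bullet> b) * integral {0..1} (\<lambda>t. D b t y0))" for v
  proof -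
    have "(fx y0) integrable_on cbox 0 1"
      unfolding fx_def by (intro integrable_continuous continuous_intros jointly_continuous_slice cD)
    then have "blinfun_apply (integral (cbox 0 1) (fx y0)) v
        = integral (cbox 0 1) (\<lambda>t. \<Sum>b\<in>Basis. (v \<bullet> b) * D b t y0)"
      by (simp add: blinfun_apply_integral fx_apply)
    also have "\<dots> = (\<Sum>b\<in>Basis. integral (cbox 0 1) (\<lambda>t. (v \<bullet> b) * D b t y0))"
      by (intro integral_sum integrable_continuous continuous_intros jointly_continuous_slice cD) auto
    finally show ?thesis by simp
  qed
  then have "blinfun_apply (integral (cbox 0 1) (fx y0))
      = (\<lambda>v. \<Sum>b\<in>Basis. (v \<bullet> b) * integral {0..1} (\<lambda>t. D b t y0))"
    by (rule ext)
  with leibniz show ?thesis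
    by simp
qed

lemma norm_segment_point_le:
  fixes x y :: "'a::real_normed_vector"
  assumes "t \<in> {0..1}"
  shows "norm (x + t *\<^sub>R (y - x)) \<le> norm x + norm y"
proof -
  have "x + t *\<^sub>R (y - x) = (1 - t) *\<^sub>R x + t *\<^sub>R y"
    by (simp add: algebra_simps)
  also have "norm \<dots> \<le> (1 - t) * norm x + t * norm y"
    using assms norm_triangle_ineq[of "(1 - t) *\<^sub>R x" "t *\<^sub>R y"] by simp
  also have "\<dots> \<le> norm x + norm y"
  proof -
    have "(1 - t) * norm x \<le> norm x" "t * norm y \<le> norm y"
      using assms by (simp_all add: mult_left_le_one_le)
    then show ?thesis by linarith
  qed
  finally show ?thesis .
qed

text \<open>Differentiating \<open>f (x0 + t(y - x0))\<close> in \<open>y\<close> brings down a factor \<open>t\<close>, so integrands that are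
  polynomials in \<open>t\<close>, \<open>y\<close> and the derivatives of \<open>A\<close> along the segment form a class closed under
  differentiation; the line integral of \<open>A\<close> over \<open>[x0, y]\<close> is the integral over \<open>t \<in> [0,1]\<close> of
  such an integrand.\<close>

definition segment_generators :: "('a::euclidean_space \<Rightarrow> 'a) \<Rightarrow> 'a \<Rightarrow> (real \<Rightarrow> 'a \<Rightarrow> real) set" where
  "segment_generators A x0 = {(\<lambda>t y. dDs vs A (x0 + t *\<^sub>R (y - x0)) \<bullet> c) | vs c. set vs \<subseteq> Basis}
     \<union> {(\<lambda>t y. y \<bullet> c) | c. True} \<union> {(\<lambda>t y. t)}"

lemma polysmoothD:
  assumes "polysmooth A" "set vs \<subseteq> Basis"
  shows "dDs vs A differentiable (at p)"
    and "\<exists>C N. \<forall>x. norm (dDs vs A x) \<le> C * (1 + norm x) ^ N"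
  using assms unfolding polysmooth_def smooth_def
  by (auto simp: differentiable_on_eq_differentiable_at)

lemma jointly_continuous_segment_pullback:
  fixes q :: "'a::euclidean_space \<Rightarrow> 'a"
  assumes "continuous_on UNIV q"
  shows "jointly_continuous (\<lambda>t y. q (x0 + t *\<^sub>R (y - x0)) \<bullet> c)"
proof -
  have "continuous_on UNIV (q \<circ> (\<lambda>z. x0 + fst z *\<^sub>R (snd z - x0)))"
    using assms by (intro continuous_on_compose continuous_intros) (auto intro: continuous_on_subset)
  then show ?thesis
    unfolding jointly_continuous_def by (intro continuous_intros) (simp add: o_def)
qed

lemma poly_bounded_segment_pullback:
  fixes q :: "'a::euclidean_space \<Rightarrow> 'a"
  assumes q: "\<And>x. norm (q x) \<le> C * (1 + norm x) ^ N"
  shows "poly_bounded_on_unit (\<lambda>t y. q (x0 + t *\<^sub>R (y - x0)) \<bullet> c)"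
proof -
  have C0: "C \<ge> 0"
    using q[of 0] by (rule poly_bound_nonneg)
  have "norm (q (x0 + t *\<^sub>R (y - x0)) \<bullet> c) \<le> (norm c * C * (1 + norm x0) ^ N) * (1 + norm y) ^ N"
    if t: "t \<in> {0..1}" for t y
  proof -
    have pw: "(1 + norm (x0 + t *\<^sub>R (y - x0))) ^ N \<le> (1 + norm x0) ^ N * (1 + norm y) ^ N"
      using norm_segment_point_le[OF t, of x0 y] by (intro one_plus_power_le_mult) simp_all
    have "norm (q (x0 + t *\<^sub>R (y - x0)) \<bullet> c) \<le> norm (q (x0 + t *\<^sub>R (y - x0))) * norm c"
      by (simp add: Cauchy_Schwarz_ineq2)
    also have "\<dots> \<le> C * (1 + norm (x0 + t *\<^sub>R (y - x0))) ^ N * norm c"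
      using q by (intro mult_right_mono) auto
    also have "\<dots> \<le> C * ((1 + norm x0) ^ N * (1 + norm y) ^ N) * norm c"
      using C0 pw by (intro mult_right_mono mult_left_mono) auto
    finally show ?thesis
      by (simp add: algebra_simps)
  qed
  then show ?thesis
    unfolding poly_bounded_on_unit_def by blast
qed

lemma has_derivative_segment_pullback:
  fixes q :: "'a::euclidean_space \<Rightarrow> 'a"
  assumes qQ: "(q has_derivative Q) (at (x0 + t *\<^sub>R (y - x0)))"
  shows "((\<lambda>y. q (x0 + t *\<^sub>R (y - x0)) \<bullet> c) has_derivative
      (\<lambda>v. \<Sum>b\<in>Basis. (v \<bullet> b) * (t * (Q b \<bullet> c)))) (at y)"
proof -
  have "((\<lambda>y. x0 + t *\<^sub>R (y - x0)) has_derivative (\<lambda>v. t *\<^sub>R v)) (at y)"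
    by (auto intro!: derivative_eq_intros)
  from has_derivative_inner_left[OF has_derivative_compose[OF this qQ]]
  have "((\<lambda>y. q (x0 + t *\<^sub>R (y - x0)) \<bullet> c) has_derivative (\<lambda>v. Q (t *\<^sub>R v) \<bullet> c)) (at y)" .
  moreover have "Q (t *\<^sub>R v) \<bullet> c = (\<Sum>b\<in>Basis. (v \<bullet> b) * (t * (Q b \<bullet> c)))" for v
  proof -
    have "linear Q"
      using qQ by (rule has_derivative_linear)
    then have "Q (t *\<^sub>R v) \<bullet> c = (\<Sum>b\<in>Basis. ((t *\<^sub>R v) \<bullet> b) * (Q b \<bullet> c))"
      by (rule Linear_Algebra.linear_componentwise)
    then show ?thesis
      by (simp add: algebra_simps)
  qed
  ultimately show ?thesis
    by simp
qed

lemma admissible_segment_pullback: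
  fixes A :: "'a::euclidean_space \<Rightarrow> 'a"
  assumes A: "polysmooth A" and vs: "set vs \<subseteq> Basis"
  shows "admissible (generated_algebra (segment_generators A x0))
      (\<lambda>t y. dDs vs A (x0 + t *\<^sub>R (y - x0)) \<bullet> c)"
proof -
  have diff: "dDs vs A differentiable (at p)" for p
    by (rule polysmoothD(1)[OF A vs])
  then have "continuous_on UNIV (dDs vs A)"
    by (simp add: continuous_at_imp_continuous_on differentiable_imp_continuous_within)
  moreover obtain C N where "\<And>x. norm (dDs vs A x) \<le> C * (1 + norm x) ^ N"
    using polysmoothD(2)[OF A vs] by blast
  moreover have "has_partials_in (generated_algebra (segment_generators A x0))
      (\<lambda>t y. dDs vs A (x0 + t *\<^sub>R (y - x0)) \<bullet> c)"
    unfolding has_partials_in_def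
  proof (intro exI[where x="\<lambda>b t y. t * (dDs (b # vs) A (x0 + t *\<^sub>R (y - x0)) \<bullet> c)"] conjI ballI allI)
    fix b :: 'a assume b: "b \<in> Basis"
    have "(\<lambda>t y. dDs (b # vs) A (x0 + t *\<^sub>R (y - x0)) \<bullet> c) \<in> segment_generators A x0"
      using b vs unfolding segment_generators_def
      by (intro UnI1 CollectI exI[of _ "b # vs"] exI[of _ c] conjI refl) simp
    moreover have "(\<lambda>t y. t) \<in> segment_generators A x0"
      unfolding segment_generators_def by simp
    ultimately show "(\<lambda>t y. t * (dDs (b # vs) A (x0 + t *\<^sub>R (y - x0)) \<bullet> c))
        \<in> generated_algebra (segment_generators A x0)"
      by (intro generated_algebra.mult generated_algebra.generator)
  next
    fix t :: real and y :: 'a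
    have "(dDs vs A has_derivative frechet_derivative (dDs vs A) (at (x0 + t *\<^sub>R (y - x0))))
        (at (x0 + t *\<^sub>R (y - x0)))"
      using diff by (simp add: frechet_derivative_works)
    from has_derivative_segment_pullback[OF this]
    show "((\<lambda>y. dDs vs A (x0 + t *\<^sub>R (y - x0)) \<bullet> c) has_derivative
        (\<lambda>v. \<Sum>b\<in>Basis. of_real (v \<bullet> b) * (t * (dDs (b # vs) A (x0 + t *\<^sub>R (y - x0)) \<bullet> c)))) (at y)"
      by (simp add: dD_def)
  qed
  ultimately show ?thesis
    unfolding admissible_def
    by (intro conjI jointly_continuous_segment_pullback poly_bounded_segment_pullback)
qed

lemma segment_generators_admissible:
  fixes A :: "'a::euclidean_space \<Rightarrow> 'a"
  assumes "polysmooth A" and "G \<in> segment_generators A x0"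
  shows "admissible (generated_algebra (segment_generators A x0)) G"
proof -
  from assms(2) consider
      vs c where "set vs \<subseteq> Basis" "G = (\<lambda>t y. dDs vs A (x0 + t *\<^sub>R (y - x0)) \<bullet> c)"
    | c where "G = (\<lambda>t y. y \<bullet> c)"
    | "G = (\<lambda>t y. t)"
    unfolding segment_generators_def by blast
  then show ?thesis
  proof cases
    case (1 vs c)
    then show ?thesis using admissible_segment_pullback[OF assms(1) 1(1)] by simp
  next
    case 2
    then show ?thesis using admissible_of_real_inner[where 'k=real] by simp
  next
    case 3
    then show ?thesis by (simp add: admissible_param)
  qed
qed

definition segment_integrals :: "('a::euclidean_space \<Rightarrow> 'a) \<Rightarrow> 'a \<Rightarrow> ('a \<Rightarrow> real) set" where
  "segment_integrals A x0 =
     {(\<lambda>y. integral {0..1} (\<lambda>t. G t y)) | G. G \<in> generated_algebra (segment_generators A x0)}"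

lemma segment_integrals_has_partials:
  fixes A :: "'a::euclidean_space \<Rightarrow> 'a"
  assumes A: "polysmooth A" and F: "F \<in> segment_integrals A x0"
  obtains D where "\<And>b. b \<in> Basis \<Longrightarrow> D b \<in> segment_integrals A x0"
    and "\<And>y. (F has_derivative (\<lambda>v. \<Sum>b\<in>Basis. (v \<bullet> b) * D b y)) (at y)"
proof -
  obtain G where G: "G \<in> generated_algebra (segment_generators A x0)"
    and F_eq: "F = (\<lambda>y. integral {0..1} (\<lambda>t. G t y))"
    using F unfolding segment_integrals_def by blast
  have adm: "admissible (generated_algebra (segment_generators A x0)) H"
    if "H \<in> generated_algebra (segment_generators A x0)" for H
    using generated_algebra_admissible[OF segment_generators_admissible[OF A] that] .
  obtain DG where DG: "\<forall>b\<in>Basis. DG b \<in> generated_algebra (segment_generators A x0)"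
    "\<forall>t y. (G t has_derivative (\<lambda>v. \<Sum>b\<in>Basis. of_real (v \<bullet> b) * DG b t y)) (at y)"
    using adm[OF G] unfolding admissible_def has_partials_in_def by blast
  show ?thesis
  proof
    show "(\<lambda>y. integral {0..1} (\<lambda>t. DG b t y)) \<in> segment_integrals A x0" if "b \<in> Basis" for b
      using DG(1) that unfolding segment_integrals_def by blast
    show "(F has_derivative (\<lambda>v. \<Sum>b\<in>Basis. (v \<bullet> b) * integral {0..1} (\<lambda>t. DG b t y))) (at y)" for y
      unfolding F_eq
    proof (rule has_derivative_integral_unit_interval)
      show "jointly_continuous G"
        using adm[OF G] unfolding admissible_def by blast
      show "jointly_continuous (DG b)" if "b \<in> Basis" for b
        using adm DG(1) that unfolding admissible_def by blast
    qed (use DG(2) in simp)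
  qed
qed

lemma segment_integrals_poly_bounded:
  fixes A :: "'a::euclidean_space \<Rightarrow> 'a"
  assumes A: "polysmooth A" and F: "F \<in> segment_integrals A x0"
  shows "\<exists>C N. \<forall>y. norm (F y) \<le> C * (1 + norm y) ^ N"
proof -
  obtain G where G: "G \<in> generated_algebra (segment_generators A x0)"
    and F_eq: "F = (\<lambda>y. integral {0..1} (\<lambda>t. G t y))"
    using F unfolding segment_integrals_def by blast
  have adm: "admissible (generated_algebra (segment_generators A x0)) G"
    using generated_algebra_admissible[OF segment_generators_admissible[OF A] G] .
  then have "poly_bounded_on_unit G"
    unfolding admissible_def by blast
  then obtain C N where C0: "C \<ge> 0" and CN: "\<And>t y. t \<in> {0..1} \<Longrightarrow> norm (G t y) \<le> C * (1 + norm y) ^ N"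
    by (elim poly_bounded_on_unitE) blast
  have "norm (F y) \<le> C * (1 + norm y) ^ N" for y
  proof -
    have "continuous_on (cbox 0 1) (\<lambda>t. G t y)"
      using adm unfolding admissible_def by (intro jointly_continuous_slice) blast
    then have hi: "((\<lambda>t. G t y) has_integral integral (cbox 0 1) (\<lambda>t. G t y)) (cbox 0 1)"
      using integrable_continuous integrable_integral by blast
    have "norm (integral (cbox 0 1) (\<lambda>t. G t y)) \<le> C * (1 + norm y) ^ N * measure lborel (cbox 0 (1::real))"
      by (rule has_integral_bound[OF _ hi]) (use C0 CN in auto)
    then show ?thesis
      unfolding F_eq by simp
  qed
  then show ?thesis by blast
qed

definition segment_line_integral :: "('a::euclidean_space \<Rightarrow> 'a) \<Rightarrow> 'a \<Rightarrow> 'a \<Rightarrow> real" where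
  "segment_line_integral A x y = integral {0..1} (\<lambda>t. A (x + t *\<^sub>R (y - x)) \<bullet> (y - x))"

lemma omegaA_eq_segment_line_integral:
  "omegaA A x y = exp (- \<i> * complex_of_real (segment_line_integral A x y))"
  unfolding omegaA_def segment_line_integral_def ..

lemma segment_line_integral_in_segment_integrals:
  fixes A :: "'a::euclidean_space \<Rightarrow> 'a"
  shows "segment_line_integral A x0 \<in> segment_integrals A x0"
proof -
  let ?S = "segment_generators A x0"
  define G where "G t y = (\<Sum>b\<in>Basis. (dDs [] A (x0 + t *\<^sub>R (y - x0)) \<bullet> b) * (y \<bullet> b + - (x0 \<bullet> b)))"
    for t y
  have "G \<in> generated_algebra ?S"
    unfolding G_def
  proof (rule generated_algebra_sum[OF finite_Basis])
    fix b :: 'a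
    have "(\<lambda>t y. dDs [] A (x0 + t *\<^sub>R (y - x0)) \<bullet> b) \<in> ?S"
      unfolding segment_generators_def by (intro UnI1 CollectI exI[of _ "[]"] exI[of _ b] conjI refl) simp
    moreover have "(\<lambda>t y. y \<bullet> b) \<in> ?S"
      unfolding segment_generators_def by (intro UnI1 UnI2 CollectI exI[of _ b] conjI refl TrueI)
    ultimately show "(\<lambda>t y. (dDs [] A (x0 + t *\<^sub>R (y - x0)) \<bullet> b) * (y \<bullet> b + - (x0 \<bullet> b))) \<in> generated_algebra ?S"
      by (intro generated_algebra.mult generated_algebra.add generated_algebra.const generated_algebra.generator)
  qed
  moreover have "A (x0 + t *\<^sub>R (y - x0)) \<bullet> (y - x0) = G t y" for t y
    using euclidean_inner[of "A (x0 + t *\<^sub>R (y - x0))" "y - x0"] unfolding G_def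
    by (simp add: inner_diff_left)
  ultimately show ?thesis
    unfolding segment_integrals_def segment_line_integral_def by auto
qed

section \<open>Gaussian wave packets\<close>

text \<open>These generators do not depend on \<open>t\<close>; the dummy parameter only serves to reuse
  \<open>generated_algebra\<close>.\<close>

definition packet_generators :: "('a::euclidean_space \<Rightarrow> 'a) \<Rightarrow> 'a \<Rightarrow> (real \<Rightarrow> 'a \<Rightarrow> complex) set" where
  "packet_generators A x0 = {(\<lambda>t y. complex_of_real (F y)) | F. F \<in> segment_integrals A x0}
     \<union> {(\<lambda>t y. complex_of_real (y \<bullet> c)) | c. True}"

lemma segment_integral_in_packet_algebra:
  "F \<in> segment_integrals A x0 \<Longrightarrow> (\<lambda>t y. complex_of_real (F y)) \<in> generated_algebra (packet_generators A x0)"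
  unfolding packet_generators_def by (rule generated_algebra.generator) blast

lemma inner_in_packet_algebra:
  "(\<lambda>t y. complex_of_real (y \<bullet> c)) \<in> generated_algebra (packet_generators A x0)"
  unfolding packet_generators_def by (rule generated_algebra.generator) blast

lemma admissible_segment_integral:
  fixes A :: "'a::euclidean_space \<Rightarrow> 'a"
  assumes A: "polysmooth A" and F: "F \<in> segment_integrals A x0"
  shows "admissible (generated_algebra (packet_generators A x0)) (\<lambda>t y. complex_of_real (F y))"
proof -
  obtain D where D: "\<And>b. b \<in> Basis \<Longrightarrow> D b \<in> segment_integrals A x0"
    and F_deriv: "\<And>y. (F has_derivative (\<lambda>v. \<Sum>b\<in>Basis. (v \<bullet> b) * D b y)) (at y)"
    using segment_integrals_has_partials[OF A F] by blast
  have "continuous_on UNIV F"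
    using F_deriv by (meson continuous_at_imp_continuous_on has_derivative_continuous)
  then have "continuous_on UNIV (F \<circ> snd)"
    by (intro continuous_on_compose continuous_intros) (auto intro: continuous_on_subset)
  then have "jointly_continuous (\<lambda>t y. complex_of_real (F y))"
    unfolding jointly_continuous_def using continuous_on_of_real by (fastforce simp: o_def)
  moreover have "has_partials_in (generated_algebra (packet_generators A x0)) (\<lambda>t y. complex_of_real (F y))"
    unfolding has_partials_in_def
  proof (intro exI[where x="\<lambda>b t y. complex_of_real (D b y)"] conjI ballI allI)
    show "(\<lambda>t y. complex_of_real (D b y)) \<in> generated_algebra (packet_generators A x0)" if "b \<in> Basis" for b
      using D[OF that] by (rule segment_integral_in_packet_algebra)
    show "((\<lambda>y. complex_of_real (F y)) has_derivative
        (\<lambda>v. \<Sum>b\<in>Basis. complex_of_real (v \<bullet> b) * complex_of_real (D b y))) (at y)" for y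
      using bounded_linear.has_derivative[OF bounded_linear_of_real F_deriv[of y]]
      by (simp add: of_real_sum)
  qed
  moreover have "poly_bounded_on_unit (\<lambda>t y. complex_of_real (F y))"
    using segment_integrals_poly_bounded[OF A F] unfolding poly_bounded_on_unit_def by simp
  ultimately show ?thesis
    unfolding admissible_def by blast
qed

lemma packet_algebra_admissible:
  fixes A :: "'a::euclidean_space \<Rightarrow> 'a"
  assumes A: "polysmooth A" and H: "H \<in> generated_algebra (packet_generators A x0)"
  shows "admissible (generated_algebra (packet_generators A x0)) H"
proof (rule generated_algebra_admissible[OF _ H])
  fix G assume "G \<in> packet_generators A x0"
  then consider F where "F \<in> segment_integrals A x0" "G = (\<lambda>t y. complex_of_real (F y))"
    | c where "G = (\<lambda>t y. complex_of_real (y \<bullet> c))"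
    unfolding packet_generators_def by blast
  then show "admissible (generated_algebra (packet_generators A x0)) G"
  proof cases
    case (1 F)
    then show ?thesis using admissible_segment_integral[OF A 1(1)] by simp
  next
    case (2 c)
    then show ?thesis using admissible_of_real_inner by simp
  qed
qed

lemma sum_Basis_inner_eq:
  fixes X :: "'a::euclidean_space \<Rightarrow> 'k::real_normed_field"
  assumes b: "b \<in> Basis"
  shows "(\<Sum>c\<in>Basis. of_real (b \<bullet> c) * X c) = X b"
proof -
  have "(\<Sum>c\<in>Basis. of_real (b \<bullet> c) * X c) = (\<Sum>c\<in>Basis. if c = b then X c else 0)"
    using b by (intro sum.cong refl) (auto simp: inner_Basis)
  also have "\<dots> = X b"
    using b by simp
  finally show ?thesis .
qed

lemma schwartz_of_gaussian_dominated_family: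
  fixes E :: "'a::euclidean_space \<Rightarrow> complex" and c :: real
  assumes c: "c > 0" and E: "E \<in> F"
    and diff: "\<And>f y. f \<in> F \<Longrightarrow> f differentiable (at y)"
    and partial: "\<And>f b. f \<in> F \<Longrightarrow> b \<in> Basis \<Longrightarrow> dD b f \<in> F"
    and bound: "\<And>f. f \<in> F \<Longrightarrow> \<exists>C N. \<forall>y. norm (f y) \<le> C * (1 + norm y) ^ N * exp (- c * (y \<bullet> y))"
  shows "E \<in> schwartz"
proof -
  have derivs: "dDs vs E \<in> F" if "set vs \<subseteq> Basis" for vs
    using that by (induction vs) (auto simp: E partial)
  have "smooth E"
    unfolding smooth_def using derivs diff by (blast intro: differentiable_at_imp_differentiable_on)
  moreover have "\<exists>B. \<forall>x. (1 + norm x) ^ K * norm (dDs vs E x) \<le> B" if vs: "set vs \<subseteq> Basis" for vs K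
  proof -
    obtain C N where CN: "\<And>y. norm (dDs vs E y) \<le> C * (1 + norm y) ^ N * exp (- c * (y \<bullet> y))"
      using bound[OF derivs[OF vs]] by blast
    have "norm (dDs vs E 0) \<le> C"
      using CN[of 0] by simp
    then have C0: "C \<ge> 0"
      by (meson norm_ge_zero order_trans)
    have "(1 + norm x) ^ K * norm (dDs vs E x) \<le> C * exp (real (K + N) ^ 2 / (4 * c))" for x
    proof -
      have "(1 + norm x) ^ K * norm (dDs vs E x) \<le> (1 + norm x) ^ K * (C * (1 + norm x) ^ N * exp (- c * (x \<bullet> x)))"
        using CN by (intro mult_left_mono) auto
      also have "\<dots> = C * ((1 + norm x) ^ (K + N) * exp (- c * (norm x)\<^sup>2))"
        by (simp add: power2_norm_eq_inner power_add algebra_simps)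
      also have "\<dots> \<le> C * exp (real (K + N) ^ 2 / (4 * c))"
        using C0 c by (intro mult_left_mono poly_times_gaussian_le) auto
      finally show ?thesis .
    qed
    then show ?thesis by blast
  qed
  ultimately show ?thesis
    unfolding schwartz_def by blast
qed

definition gaussian_packet :: "('a::euclidean_space \<Rightarrow> 'a) \<Rightarrow> 'a \<Rightarrow> 'a \<Rightarrow> real \<Rightarrow> 'a \<Rightarrow> complex" where
  "gaussian_packet A x0 \<eta>0 e y =
     exp (\<i> * complex_of_real (segment_line_integral A x0 y + y \<bullet> \<eta>0) - complex_of_real (e\<^sup>2 / 2 * (y \<bullet> y)))"

lemma norm_gaussian_packet: "norm (gaussian_packet A x0 \<eta>0 e y) = exp (- (e\<^sup>2 / 2) * (y \<bullet> y))"
  unfolding gaussian_packet_def by (simp add: norm_exp_eq_Re)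

lemma has_derivative_packet_phase:
  fixes F :: "'a::euclidean_space \<Rightarrow> real"
  assumes deriv: "(F has_derivative (\<lambda>v. \<Sum>b\<in>Basis. (v \<bullet> b) * D b y)) (at y)"
  shows "((\<lambda>y. \<i> * complex_of_real (F y + y \<bullet> \<eta>0) - complex_of_real (e\<^sup>2 / 2 * (y \<bullet> y))) has_derivative
      (\<lambda>v. \<Sum>b\<in>Basis. complex_of_real (v \<bullet> b) * (\<i> * complex_of_real (D b y) + \<i> * complex_of_real (b \<bullet> \<eta>0)
        - complex_of_real (e\<^sup>2) * complex_of_real (y \<bullet> b)))) (at y)"
proof -
  have "((\<lambda>y. \<i> * complex_of_real (F y + y \<bullet> \<eta>0) - complex_of_real (e\<^sup>2 / 2 * (y \<bullet> y))) has_derivative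
      (\<lambda>v. \<i> * complex_of_real ((\<Sum>b\<in>Basis. (v \<bullet> b) * D b y) + v \<bullet> \<eta>0)
        - complex_of_real (e\<^sup>2 / 2 * (y \<bullet> v + v \<bullet> y)))) (at y)"
    by (intro has_derivative_diff has_derivative_mult_right has_derivative_add deriv
        bounded_linear.has_derivative[OF bounded_linear_of_real] has_derivative_inner_left
        has_derivative_inner has_derivative_ident)
  moreover have "\<i> * complex_of_real ((\<Sum>b\<in>Basis. (v \<bullet> b) * D b y) + v \<bullet> \<eta>0)
      - complex_of_real (e\<^sup>2 / 2 * (y \<bullet> v + v \<bullet> y))
    = (\<Sum>b\<in>Basis. complex_of_real (v \<bullet> b) * (\<i> * complex_of_real (D b y) + \<i> * complex_of_real (b \<bullet> \<eta>0)
        - complex_of_real (e\<^sup>2) * complex_of_real (y \<bullet> b)))" for v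
  proof -
    have "v \<bullet> \<eta>0 = (\<Sum>b\<in>Basis. (v \<bullet> b) * (\<eta>0 \<bullet> b))" "v \<bullet> y = (\<Sum>b\<in>Basis. (v \<bullet> b) * (y \<bullet> b))"
      by (rule euclidean_inner)+
    then show ?thesis
      by (simp add: inner_commute[of y v] inner_commute[of \<eta>0] of_real_sum sum_distrib_left sum.distrib
          sum_subtractf algebra_simps)
  qed
  ultimately show ?thesis
    by simp
qed

lemma gaussian_packet_has_partials:
  fixes A :: "'a::euclidean_space \<Rightarrow> 'a"
  assumes A: "polysmooth A"
  obtains Q where "\<And>b. b \<in> Basis \<Longrightarrow> (\<lambda>t y. Q b y) \<in> generated_algebra (packet_generators A x0)"
    and "\<And>y. (gaussian_packet A x0 \<eta>0 e has_derivative
          (\<lambda>v. gaussian_packet A x0 \<eta>0 e y * (\<Sum>b\<in>Basis. complex_of_real (v \<bullet> b) * Q b y))) (at y)"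
proof -
  obtain D where D: "\<And>b. b \<in> Basis \<Longrightarrow> D b \<in> segment_integrals A x0"
    and deriv: "\<And>y. (segment_line_integral A x0 has_derivative (\<lambda>v. \<Sum>b\<in>Basis. (v \<bullet> b) * D b y)) (at y)"
    using segment_integrals_has_partials[OF A segment_line_integral_in_segment_integrals] by blast
  define Q where "Q b y = \<i> * complex_of_real (D b y) + \<i> * complex_of_real (b \<bullet> \<eta>0)
      - complex_of_real (e\<^sup>2) * complex_of_real (y \<bullet> b)" for b y
  have "(\<lambda>t y. Q b y) \<in> generated_algebra (packet_generators A x0)" if "b \<in> Basis" for b
  proof -
    have "(\<lambda>t y. (\<i> * complex_of_real (D b y) + \<i> * complex_of_real (b \<bullet> \<eta>0))
        + (- complex_of_real (e\<^sup>2)) * complex_of_real (y \<bullet> b)) \<in> generated_algebra (packet_generators A x0)"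
      using segment_integral_in_packet_algebra[OF D[OF that]] inner_in_packet_algebra
      by (intro generated_algebra.add generated_algebra.mult generated_algebra.const)
    then show ?thesis
      unfolding Q_def by simp
  qed
  moreover have "(gaussian_packet A x0 \<eta>0 e has_derivative
      (\<lambda>v. gaussian_packet A x0 \<eta>0 e y * (\<Sum>b\<in>Basis. complex_of_real (v \<bullet> b) * Q b y))) (at y)" for y
    unfolding gaussian_packet_def Q_def
    by (rule has_derivative_compose[OF has_derivative_packet_phase[OF deriv]])
      (use DERIV_exp in \<open>simp add: has_field_derivative_def\<close>)
  ultimately show ?thesis
    using that by blast
qed

lemma gaussian_packet_multiple_partial:
  fixes A :: "'a::euclidean_space \<Rightarrow> 'a"
  assumes A: "polysmooth A" and H: "H \<in> generated_algebra (packet_generators A x0)"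
  shows "(\<lambda>y. H 0 y * gaussian_packet A x0 \<eta>0 e y) differentiable (at y)"
    and "b \<in> Basis \<Longrightarrow> \<exists>H' \<in> generated_algebra (packet_generators A x0).
           dD b (\<lambda>y. H 0 y * gaussian_packet A x0 \<eta>0 e y) = (\<lambda>y. H' 0 y * gaussian_packet A x0 \<eta>0 e y)"
proof -
  let ?E = "gaussian_packet A x0 \<eta>0 e"
  obtain Q where Q_alg: "\<And>b. b \<in> Basis \<Longrightarrow> (\<lambda>t y. Q b y) \<in> generated_algebra (packet_generators A x0)"
    and E_deriv: "\<And>y. (?E has_derivative (\<lambda>v. ?E y * (\<Sum>b\<in>Basis. complex_of_real (v \<bullet> b) * Q b y))) (at y)"
    using gaussian_packet_has_partials[OF A] by blast
  obtain DH where DH: "\<forall>b\<in>Basis. DH b \<in> generated_algebra (packet_generators A x0)"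
    "\<forall>t y. (H t has_derivative (\<lambda>v. \<Sum>b\<in>Basis. complex_of_real (v \<bullet> b) * DH b t y)) (at y)"
    using packet_algebra_admissible[OF A H] unfolding admissible_def has_partials_in_def by blast
  have deriv: "((\<lambda>y. H 0 y * ?E y) has_derivative (\<lambda>v. H 0 y * (?E y * (\<Sum>b\<in>Basis. complex_of_real (v \<bullet> b) * Q b y))
      + (\<Sum>b\<in>Basis. complex_of_real (v \<bullet> b) * DH b 0 y) * ?E y)) (at y)" for y
    using DH(2) E_deriv by (intro has_derivative_mult) auto
  then show "(\<lambda>y. H 0 y * ?E y) differentiable (at y)"
    unfolding differentiable_def by blast
  assume b: "b \<in> Basis"
  have "dD b (\<lambda>y. H 0 y * ?E y) y = (DH b 0 y + H 0 y * Q b y) * ?E y" for y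
  proof -
    have "dD b (\<lambda>y. H 0 y * ?E y) y = H 0 y * (?E y * (\<Sum>c\<in>Basis. complex_of_real (b \<bullet> c) * Q c y))
        + (\<Sum>c\<in>Basis. complex_of_real (b \<bullet> c) * DH c 0 y) * ?E y"
      unfolding dD_def using deriv[of y] by (simp add: frechet_derivative_at[symmetric])
    then show ?thesis
      using b by (simp only: sum_Basis_inner_eq) (simp add: algebra_simps)
  qed
  moreover have "(\<lambda>t y. DH b t y + H t y * Q b y) \<in> generated_algebra (packet_generators A x0)"
    using DH(1) b H Q_alg[OF b] by (intro generated_algebra.add generated_algebra.mult) auto
  ultimately show "\<exists>H' \<in> generated_algebra (packet_generators A x0).
      dD b (\<lambda>y. H 0 y * ?E y) = (\<lambda>y. H' 0 y * ?E y)"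
    by (intro bexI[where x="\<lambda>t y. DH b t y + H t y * Q b y"]) auto
qed

lemma gaussian_packet_multiple_bound:
  fixes A :: "'a::euclidean_space \<Rightarrow> 'a"
  assumes A: "polysmooth A" and H: "H \<in> generated_algebra (packet_generators A x0)"
  shows "\<exists>C N. \<forall>y. norm (H 0 y * gaussian_packet A x0 \<eta>0 e y) \<le> C * (1 + norm y) ^ N * exp (- (e\<^sup>2 / 2) * (y \<bullet> y))"
proof -
  have "poly_bounded_on_unit H"
    using packet_algebra_admissible[OF A H] unfolding admissible_def by blast
  then obtain C N where "\<And>t y. t \<in> {0..1} \<Longrightarrow> norm (H t y) \<le> C * (1 + norm y) ^ N"
    by (elim poly_bounded_on_unitE) blast
  then have "norm (H 0 y * gaussian_packet A x0 \<eta>0 e y) \<le> C * (1 + norm y) ^ N * exp (- (e\<^sup>2 / 2) * (y \<bullet> y))" for y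
    unfolding norm_mult norm_gaussian_packet by (intro mult_right_mono) auto
  then show ?thesis by blast
qed

lemma gaussian_packet_schwartz:
  fixes A :: "'a::euclidean_space \<Rightarrow> 'a"
  assumes A: "polysmooth A" and e: "e > 0"
  shows "gaussian_packet A x0 \<eta>0 e \<in> schwartz"
proof (rule schwartz_of_gaussian_dominated_family)
  define Fam where "Fam = {(\<lambda>y. H 0 y * gaussian_packet A x0 \<eta>0 e y) | H. H \<in> generated_algebra (packet_generators A x0)}"
  show "gaussian_packet A x0 \<eta>0 e \<in> Fam"
    unfolding Fam_def using generated_algebra.const[of 1] by force
  show "f differentiable (at y)" if "f \<in> Fam" for f y
    using that gaussian_packet_multiple_partial(1)[OF A] unfolding Fam_def by blast
  show "dD b f \<in> Fam" if "f \<in> Fam" "b \<in> Basis" for f b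
    using that gaussian_packet_multiple_partial(2)[OF A] unfolding Fam_def by blast
  show "\<exists>C N. \<forall>y. norm (f y) \<le> C * (1 + norm y) ^ N * exp (- (e\<^sup>2 / 2) * (y \<bullet> y))" if "f \<in> Fam" for f
    using that gaussian_packet_multiple_bound[OF A] unfolding Fam_def by blast
qed (use e in simp)

section \<open>Symbols and the magnetic operator\<close>

lemma continuous_on_Pair_slice:
  assumes "continuous_on UNIV f"
  shows "continuous_on UNIV (\<lambda>y. f (x, y))"
proof -
  have "continuous_on UNIV (f \<circ> Pair x)"
    by (intro continuous_on_compose continuous_intros) (auto intro: continuous_on_subset assms)
  then show ?thesis
    by (simp add: o_def)
qed

lemma jbr_le_one_plus_norm: "jbr \<xi> \<le> 1 + norm \<xi>"
proof -
  have "sqrt (1 + (norm \<xi>)\<^sup>2) \<le> sqrt ((1 + norm \<xi>)\<^sup>2)"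
    by (intro real_sqrt_le_mono) (simp add: power2_eq_square algebra_simps)
  then show ?thesis
    unfolding jbr_def by simp
qed

lemma smooth_imp_continuous_on:
  assumes "smooth f"
  shows "continuous_on UNIV f"
proof -
  have "dDs [] f differentiable_on UNIV"
    using assms unfolding smooth_def by (metis empty_set empty_subsetI)
  then show ?thesis
    by (simp add: differentiable_imp_continuous_on)
qed

lemma symb_continuous: "a \<in> symb m \<Longrightarrow> continuous_on UNIV a"
  unfolding symb_def by (blast intro: smooth_imp_continuous_on)

lemma symb_poly_bounded:
  fixes a :: "(real^'n) \<times> (real^'n) \<Rightarrow> 'b::real_normed_vector"
  assumes a: "a \<in> symb m"
  obtains C N where "C \<ge> 0" "\<And>x \<xi>. norm (a (x, \<xi>)) \<le> C * (1 + norm \<xi>) ^ N"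
proof -
  obtain C where C: "\<And>x \<xi>. norm (a (x, \<xi>)) \<le> C * jbr \<xi> powr m"
    using a unfolding symb_def by (force dest: spec[of _ "[]"])
  have jbr1: "1 \<le> jbr \<xi>" for \<xi> :: "real^'n"
    unfolding jbr_def by simp
  have "0 \<le> C * jbr (0::real^'n) powr m"
    using C[of 0 0] norm_ge_zero order_trans by blast
  moreover have "0 < jbr (0::real^'n) powr m"
    using jbr1[of 0] by simp
  ultimately have C0: "C \<ge> 0"
    by (simp add: zero_le_mult_iff)
  define N where "N = nat \<lceil>\<bar>m\<bar>\<rceil>"
  have "jbr \<xi> powr m \<le> (1 + norm \<xi>) ^ N" for \<xi> :: "real^'n"
  proof -
    have "jbr \<xi> powr m \<le> jbr \<xi> powr (real N)"
      using jbr1[of \<xi>] unfolding N_def by (intro powr_mono) linarith+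
    also have "\<dots> = jbr \<xi> ^ N"
      using jbr1[of \<xi>] by (simp add: powr_realpow)
    also have "\<dots> \<le> (1 + norm \<xi>) ^ N"
      using jbr1[of \<xi>] jbr_le_one_plus_norm[of \<xi>] by (intro power_mono) auto
    finally show ?thesis .
  qed
  then have "norm (a (x, \<xi>)) \<le> C * (1 + norm \<xi>) ^ N" for x \<xi>
    using C[of x \<xi>] C0 by (meson mult_left_mono order_trans)
  with C0 that show ?thesis by blast
qed

lemma OpA_gaussian_packet:
  fixes A :: "real^'n \<Rightarrow> real^'n" and U :: "(real^'n) \<times> (real^'n) \<Rightarrow> real"
    and c :: "(real^'n) \<times> (real^'n) \<Rightarrow> complex"
  assumes e: "e > 0"
  shows "OpA A U c (gaussian_packet A x0 \<eta>0 e) x0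
    = complex_of_real ((2 * pi) powr (- real CARD('n))) *
      (\<integral>\<eta>. (exp (\<i> * complex_of_real (U (x0, \<eta>))) * c (x0, \<eta>)) *
             complex_of_real ((sqrt (2*pi) / e) ^ DIM(real^'n) * exp (- ((\<eta> - \<eta>0) \<bullet> (\<eta> - \<eta>0)) / (2 * e\<^sup>2))) \<partial>lborel)"
proof -
  have integrand: "exp (\<i> * complex_of_real (U (x0, \<eta>) - y \<bullet> \<eta>)) * omegaA A x0 y * c (x0, \<eta>) *
      gaussian_packet A x0 \<eta>0 e y
    = (exp (\<i> * complex_of_real (U (x0, \<eta>))) * c (x0, \<eta>)) *
      exp (- (\<i> * complex_of_real (y \<bullet> (\<eta> - \<eta>0))) - complex_of_real (e\<^sup>2 / 2 * (y \<bullet> y)))" for \<eta> y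
  proof -
    have phase: "\<i> * complex_of_real (U (x0, \<eta>) - y \<bullet> \<eta>) + - \<i> * complex_of_real (segment_line_integral A x0 y)
       + (\<i> * complex_of_real (segment_line_integral A x0 y + y \<bullet> \<eta>0) - complex_of_real (e\<^sup>2 / 2 * (y \<bullet> y)))
       = \<i> * complex_of_real (U (x0, \<eta>)) + (- (\<i> * complex_of_real (y \<bullet> (\<eta> - \<eta>0))) - complex_of_real (e\<^sup>2 / 2 * (y \<bullet> y)))"
      by (simp add: inner_diff_right algebra_simps)
    have "exp (\<i> * complex_of_real (U (x0, \<eta>) - y \<bullet> \<eta>)) * omegaA A x0 y * c (x0, \<eta>) * gaussian_packet A x0 \<eta>0 e y
      = c (x0, \<eta>) * exp (\<i> * complex_of_real (U (x0, \<eta>) - y \<bullet> \<eta>) + - \<i> * complex_of_real (segment_line_integral A x0 y)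
       + (\<i> * complex_of_real (segment_line_integral A x0 y + y \<bullet> \<eta>0) - complex_of_real (e\<^sup>2 / 2 * (y \<bullet> y))))"
      unfolding omegaA_eq_segment_line_integral gaussian_packet_def by (simp only: exp_add mult_ac)
    also have "\<dots> = c (x0, \<eta>) * exp (\<i> * complex_of_real (U (x0, \<eta>))
        + (- (\<i> * complex_of_real (y \<bullet> (\<eta> - \<eta>0))) - complex_of_real (e\<^sup>2 / 2 * (y \<bullet> y))))"
      by (simp only: phase)
    also have "\<dots> = (exp (\<i> * complex_of_real (U (x0, \<eta>))) * c (x0, \<eta>)) *
      exp (- (\<i> * complex_of_real (y \<bullet> (\<eta> - \<eta>0))) - complex_of_real (e\<^sup>2 / 2 * (y \<bullet> y)))"
      by (simp only: exp_add mult_ac)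
    finally show ?thesis .
  qed
  have "(\<integral>y. exp (\<i> * complex_of_real (U (x0, \<eta>) - y \<bullet> \<eta>)) * omegaA A x0 y * c (x0, \<eta>) *
      gaussian_packet A x0 \<eta>0 e y \<partial>lborel)
    = (exp (\<i> * complex_of_real (U (x0, \<eta>))) * c (x0, \<eta>)) *
      complex_of_real ((sqrt (2*pi) / e) ^ DIM(real^'n) * exp (- ((\<eta> - \<eta>0) \<bullet> (\<eta> - \<eta>0)) / (2 * e\<^sup>2)))" for \<eta>
    unfolding integrand integral_mult_right_zero gaussian_fourier(2)[OF e] ..
  then show ?thesis
    unfolding OpA_def by simp
qed

lemma integrable_symbol_times_gaussian:
  fixes a :: "(real^'n) \<times> (real^'n) \<Rightarrow> complex" and U :: "(real^'n) \<times> (real^'n) \<Rightarrow> real"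
  assumes a: "a \<in> symb m" and Uc: "continuous_on UNIV (\<lambda>\<eta>. U (x0, \<eta>))" and e: "e > 0"
  shows "integrable lborel (\<lambda>\<eta>. exp (\<i> * complex_of_real (U (x0, \<eta>))) * a (x0, \<eta>) *
      complex_of_real (exp (- ((\<eta> - \<eta>0) \<bullet> (\<eta> - \<eta>0)) / (2 * e\<^sup>2))))"
proof -
  obtain C N where "C \<ge> 0" and CN: "\<And>x \<xi>. norm (a (x, \<xi>)) \<le> C * (1 + norm \<xi>) ^ N"
    by (rule symb_poly_bounded[OF a]) blast
  show ?thesis
  proof (rule integrable_poly_gaussian_bounded[where c="1 / (2 * e\<^sup>2)" and C=C and N=N])
  show "norm (exp (\<i> * complex_of_real (U (x0, y))) * a (x0, y) * complex_of_real (exp (- ((y - \<eta>0) \<bullet> (y - \<eta>0)) / (2 * e\<^sup>2))))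
      \<le> C * (1 + norm y) ^ N * exp (- (1 / (2 * e\<^sup>2)) * ((y - \<eta>0) \<bullet> (y - \<eta>0)))" for y
  proof -
    have "norm (exp (\<i> * complex_of_real (U (x0, y))) * a (x0, y) * complex_of_real (exp (- ((y - \<eta>0) \<bullet> (y - \<eta>0)) / (2 * e\<^sup>2))))
        = norm (a (x0, y)) * exp (- (1 / (2 * e\<^sup>2)) * ((y - \<eta>0) \<bullet> (y - \<eta>0)))"
      by (simp add: norm_mult norm_exp_eq_Re)
    also have "\<dots> \<le> C * (1 + norm y) ^ N * exp (- (1 / (2 * e\<^sup>2)) * ((y - \<eta>0) \<bullet> (y - \<eta>0)))"
      using CN by (intro mult_right_mono) auto
    finally show ?thesis .
  qed
  have "continuous_on UNIV (\<lambda>\<eta>. a (x0, \<eta>))"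
    using symb_continuous[OF a] by (rule continuous_on_Pair_slice)
  then show "(\<lambda>\<eta>. exp (\<i> * complex_of_real (U (x0, \<eta>))) * a (x0, \<eta>) *
      complex_of_real (exp (- ((\<eta> - \<eta>0) \<bullet> (\<eta> - \<eta>0)) / (2 * e\<^sup>2)))) \<in> borel_measurable borel"
    using e by (intro borel_measurable_continuous_onI continuous_intros Uc) auto
  qed (use e in simp)
qed

lemma symbol_eq_if_OpA_gaussian_packets_eq:
  fixes a b :: "(real^'n) \<times> (real^'n) \<Rightarrow> complex" and U :: "(real^'n) \<times> (real^'n) \<Rightarrow> real"
  assumes a: "a \<in> symb m" and b: "b \<in> symb m"
    and Uc: "continuous_on UNIV (\<lambda>\<eta>. U (x0, \<eta>))"
    and eq: "\<And>e. e > 0 \<Longrightarrow> OpA A U a (gaussian_packet A x0 \<eta>0 e) x0 = OpA A U b (gaussian_packet A x0 \<eta>0 e) x0"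
  shows "a (x0, \<eta>0) = b (x0, \<eta>0)"
proof -
  define g where "g \<eta> = exp (\<i> * complex_of_real (U (x0, \<eta>))) * a (x0, \<eta>)
      - exp (\<i> * complex_of_real (U (x0, \<eta>))) * b (x0, \<eta>)" for \<eta>
  define \<gamma> where "\<gamma> e \<eta> = complex_of_real (exp (- ((\<eta> - \<eta>0) \<bullet> (\<eta> - \<eta>0)) / (2 * e\<^sup>2)))" for e \<eta>
  have "continuous_on UNIV (\<lambda>\<eta>. a (x0, \<eta>))" "continuous_on UNIV (\<lambda>\<eta>. b (x0, \<eta>))"
    using symb_continuous[OF a] symb_continuous[OF b] by (auto intro: continuous_on_Pair_slice)
  then have "continuous_on UNIV g"
    unfolding g_def by (intro continuous_intros Uc)
  moreover obtain Ca Na Cb Nb where "Ca \<ge> 0" "\<And>x \<xi>. norm (a (x, \<xi>)) \<le> Ca * (1 + norm \<xi>) ^ Na"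
    and "Cb \<ge> 0" "\<And>x \<xi>. norm (b (x, \<xi>)) \<le> Cb * (1 + norm \<xi>) ^ Nb"
    using symb_poly_bounded[OF a] symb_poly_bounded[OF b] by metis
  then have "norm (g \<eta>) \<le> (Ca + Cb) * (1 + norm \<eta>) ^ (Na + Nb)" for \<eta>
    using norm_triangle_ineq4[of "exp (\<i> * complex_of_real (U (x0, \<eta>))) * a (x0, \<eta>)"
        "exp (\<i> * complex_of_real (U (x0, \<eta>))) * b (x0, \<eta>)"]
      poly_bound_add[of Ca Cb "norm \<eta>" "norm (a (x0, \<eta>))" Na "norm (b (x0, \<eta>))" Nb]
    unfolding g_def by (simp add: norm_mult norm_exp_eq_Re)
  moreover have "(\<integral>\<eta>. g \<eta> * \<gamma> e \<eta> \<partial>lborel) = 0" if e: "e > 0" for e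
  proof -
    define K where "K = (2 * pi) powr (- real CARD('n)) * (sqrt (2*pi) / e) ^ DIM(real^'n)"
    have "K \<noteq> 0"
      using e unfolding K_def by simp
    have OpA_eq: "OpA A U c (gaussian_packet A x0 \<eta>0 e) x0
        = complex_of_real K * (\<integral>\<eta>. exp (\<i> * complex_of_real (U (x0, \<eta>))) * c (x0, \<eta>) * \<gamma> e \<eta> \<partial>lborel)" for c
      unfolding OpA_gaussian_packet[OF e] K_def \<gamma>_def
      by (simp add: integral_mult_right_zero[symmetric] mult_ac)
    have "(\<integral>\<eta>. g \<eta> * \<gamma> e \<eta> \<partial>lborel)
        = (\<integral>\<eta>. exp (\<i> * complex_of_real (U (x0, \<eta>))) * a (x0, \<eta>) * \<gamma> e \<eta> \<partial>lborel)
          - (\<integral>\<eta>. exp (\<i> * complex_of_real (U (x0, \<eta>))) * b (x0, \<eta>) * \<gamma> e \<eta> \<partial>lborel)"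
      unfolding g_def \<gamma>_def left_diff_distrib
      by (intro Bochner_Integration.integral_diff integrable_symbol_times_gaussian[OF a Uc e]
          integrable_symbol_times_gaussian[OF b Uc e])
    also have "\<dots> = 0"
      using eq[OF e] \<open>K \<noteq> 0\<close> unfolding OpA_eq by simp
    finally show ?thesis .
  qed
  ultimately have "g \<eta>0 = 0"
    unfolding \<gamma>_def by (rule eq_zero_if_gaussian_averages_vanish)
  then show ?thesis
    unfolding g_def by simp
qed

theorem lemma2p4:
  fixes U d :: "(real^'n) \<times> (real^'n) \<Rightarrow> real"
    and A :: "real^'n \<Rightarrow> real^'n"
    and B :: "'n \<Rightarrow> 'n \<Rightarrow> real^'n \<Rightarrow> real"
    and \<delta> m :: real
  assumes U_def: "\<forall>x \<eta>. U (x, \<eta>) = x \<bullet> \<eta> + d (x, \<eta>)"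
    and d_Splus: "d \<in> splus"
    and delta_lt: "\<delta> < 1"
    and mix_bound: "\<forall>x \<eta>. onorm (\<lambda>v. mixmat d x \<eta> *v v) \<le> \<delta>"
    and B_bc: "\<forall>j k. bcinf (B j k)"
    and B_antisym: "\<forall>j k x. B j k x = - B k j x"
    and B_closed: "\<forall>i j k x. dD (axis i 1) (B j k) x + dD (axis j 1) (B k i) x + dD (axis k 1) (B i j) x = 0"
    and A_pol: "polysmooth A"
    and dA_B: "\<forall>j k x. B j k x = dD (axis j 1) (\<lambda>y. A y $ k) x - dD (axis k 1) (\<lambda>y. A y $ j) x"
  shows "\<forall>a \<in> (symb m :: ((real^'n) \<times> (real^'n) \<Rightarrow> complex) set). \<forall>b \<in> symb m.
           (\<forall>u \<in> schwartz. OpA A U a u = OpA A U b u) \<longrightarrow> a = b"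
proof (intro ballI impI ext)
  fix a b :: "(real^'n) \<times> (real^'n) \<Rightarrow> complex" and z
  assume a: "a \<in> symb m" and b: "b \<in> symb m" and eq: "\<forall>u \<in> schwartz. OpA A U a u = OpA A U b u"
  obtain x0 \<eta>0 :: "real^'n" where z: "z = (x0, \<eta>0)"
    by (cases z)
  have "continuous_on UNIV d"
    using d_Splus unfolding splus_def by (blast intro: smooth_imp_continuous_on)
  then have "continuous_on UNIV (\<lambda>\<eta>. x0 \<bullet> \<eta> + d (x0, \<eta>))"
    by (intro continuous_intros continuous_on_Pair_slice)
  then have Uc: "continuous_on UNIV (\<lambda>\<eta>. U (x0, \<eta>))"
    using U_def by simp
  show "a z = b z"
    unfolding z
  proof (rule symbol_eq_if_OpA_gaussian_packets_eq[OF a b Uc])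
    show "OpA A U a (gaussian_packet A x0 \<eta>0 e) x0 = OpA A U b (gaussian_packet A x0 \<eta>0 e) x0" if "e > 0" for e
      using eq gaussian_packet_schwartz[OF A_pol that] by simp
  qed
qed

end
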